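(* Let $n\ge 1$ and $m\ge 1$ be integers and let $H_m(\mathbb B)$ be the analytic functional Hilbert space on the open unit ball $\mathbb B\subset\mathbb C^n$ with reproducing kernel $K_m(z,w)=(1-\langle z,w\rangle)^{-m}$. Let $g,h\in H_m(\mathbb B)$ and let $T\in L(H_m(\mathbb B))$ be a bounded Toeplitz operator with pluriharmonic symbol $f=g+\overline h$, i.e. $Tp=T_gp+T_h^*p$ for all $p\in\mathbb C[z]$. Then \[ M^{\prime *}_zTM^\prime_z = P_{{\rm Im}M^*_z}\Big(\oplus \sum^{m-1}_{j=0}(-1)^j\binom{m}{j+1}\sigma^j_{M_z}(T)\Big)P_{{\rm Im}M^*_z}. \]
   Context: $H_m(\mathbb B)=\{f=\sum_{\alpha\in\mathbb N^n}f_\alpha z^\alpha\in\mathcal O(\mathbb B):\ \|f\|^2=\sum_\alpha |f_\alpha|^2/\rho_m(\alpha)<\infty\}$ with $\rho_m(\alpha)=\frac{(m+|\alpha|-1)!}{\alpha!(m-1)!}$; the monomials are orthogonal and polynomials are dense. Let $\mathbb H_k$ denote the space of homogeneous polynomials of degree $k$, so $H_m(\mathbb B)$ is the orthogonal sum of the $\mathbb H_k$, and every $f$ has homogeneous expansion $f=\sum_k f_k$, $f_k\in\mathbb H_k$. $M_z:H_m(\mathbb B)^n\to H_m(\mathbb B)$, $(f_i)\mapsto\sum_i z_if_i$, is the row multiplication operator (it has closed range), $M_z^*:H_m(\mathbb B)\to H_m(\mathbb B)^n$, $f\mapsto (M_{z_i}^*f)_i$, is its adjoint, and $P_{{\rm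 Im}M_z^*}$ is the orthogonal projection of $H_m(\mathbb B)^n$ onto the closed range of $M_z^*$. Let $\delta\in L(H_m(\mathbb B))$ be the diagonal operator $\delta(\sum_k f_k)=f_0+\sum_{k\ge1}\frac{m+k-1}{k}f_k$, and define $M_z'=\delta M_z:H_m(\mathbb B)^n\to H_m(\mathbb B)$, with adjoint $M_z'^*$. For $X\in L(H_m(\mathbb B))$, $\sigma_{M_z}(X)=\sum_{i=1}^n M_{z_i}XM_{z_i}^*$, $\sigma^j_{M_z}$ is its $j$-th iterate ($\sigma^0_{M_z}(X)=X$), and $\oplus X$ denotes $X\oplus\cdots\oplus X$ ($n$ copies) on $H_m(\mathbb B)^n$. For $u\in H_m(\mathbb B)$, $T_u$ denotes the densely defined closed multiplication operator $D_u\to H_m(\mathbb B)$, $v\mapsto uv$, with domain $D_u=\{v\in H_m(\mathbb B): uv\in H_m(\mathbb B)\}\supset\mathbb C[z]$, and $T_u^*$ its Hilbert space adjoint; the polynomials lie in the domain of $T_u^*$ and $T_u^*z^\alpha=\sum_{0\le\beta\le\alpha}\frac{\rho_m(\alpha-\beta)}{\rho_m(\alpha)}\overline{u_\beta}z^{\alpha-\beta}$. A bounded operator $T$ on $H_m(\mathbb B)$ is called a Toeplitz operator with pluriharmonic symbol $f$ if there are $g,h\in H_m(\mathbb B)$ with $f=g+\overline h$ and $Tp=T_gp+T_h^*p$ for all $p\in\mathbb C[z]$. *)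

theory Defs
  imports "HOL-Analysis.Analysis" "HOL-Library.Function_Algebras"
begin

text \<open>Concrete model of H_m(B) on the unit ball of C^n, n = CARD('n):
  a function is represented by its Taylor coefficients, indexed by
  multi-indices 'n \<Rightarrow> nat.  Elements of H_m(B)^n are maps 'n \<Rightarrow> coefficient map.\<close>

type_synonym 'n coeffs = "('n \<Rightarrow> nat) \<Rightarrow> complex"

definition mdeg :: "('n::finite \<Rightarrow> nat) \<Rightarrow> nat" where
  "mdeg \<alpha> = (\<Sum>i\<in>UNIV. \<alpha> i)"

definition rho :: "nat \<Rightarrow> ('n::finite \<Rightarrow> nat) \<Rightarrow> real" where
  "rho m \<alpha> = real (fact (m + mdeg \<alpha> - 1)) /
      (real (\<Prod>i\<in>UNIV. fact (\<alpha> i)) * real (fact (m - 1)))"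

definition inH :: "nat \<Rightarrow> 'n::finite coeffs \<Rightarrow> bool" where
  "inH m f \<longleftrightarrow> (\<lambda>\<alpha>. (cmod (f \<alpha>))\<^sup>2 / rho m \<alpha>) summable_on UNIV"

definition innerH :: "nat \<Rightarrow> 'n::finite coeffs \<Rightarrow> 'n coeffs \<Rightarrow> complex" where
  "innerH m f g = (\<Sum>\<^sub>\<infinity>\<alpha>. f \<alpha> * cnj (g \<alpha>) / complex_of_real (rho m \<alpha>))"

definition normH :: "nat \<Rightarrow> 'n::finite coeffs \<Rightarrow> real" where
  "normH m f = sqrt (Re (innerH m f f))"

definition inHn :: "nat \<Rightarrow> ('n::finite \<Rightarrow> 'n coeffs) \<Rightarrow> bool" where
  "inHn m F \<longleftrightarrow> (\<forall>i. inH m (F i))"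

definition innerHn :: "nat \<Rightarrow> ('n::finite \<Rightarrow> 'n coeffs) \<Rightarrow> ('n \<Rightarrow> 'n coeffs) \<Rightarrow> complex" where
  "innerHn m F G = (\<Sum>i\<in>UNIV. innerH m (F i) (G i))"

definition normHn :: "nat \<Rightarrow> ('n::finite \<Rightarrow> 'n coeffs) \<Rightarrow> real" where
  "normHn m F = sqrt (Re (innerHn m F F))"

definition smul :: "complex \<Rightarrow> 'n coeffs \<Rightarrow> 'n coeffs" where
  "smul c f = (\<lambda>\<alpha>. c * f \<alpha>)"

text \<open>Bounded linear operators on H_m(B) (values outside H_m(B) irrelevant).\<close>
definition bdd_op :: "nat \<Rightarrow> ('n::finite coeffs \<Rightarrow> 'n coeffs) \<Rightarrow> bool" where
  "bdd_op m A \<longleftrightarrow> (\<forall>f. inH m f \<longrightarrow> inH m (A f)) \<and>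
     (\<forall>f g. inH m f \<longrightarrow> inH m g \<longrightarrow> A (f + g) = A f + A g) \<and>
     (\<forall>c f. inH m f \<longrightarrow> A (smul c f) = smul c (A f)) \<and>
     (\<exists>C. \<forall>f. inH m f \<longrightarrow> normH m (A f) \<le> C * normH m f)"

definition hadj :: "('a \<Rightarrow> bool) \<Rightarrow> ('a \<Rightarrow> 'a \<Rightarrow> complex) \<Rightarrow>
    ('b \<Rightarrow> bool) \<Rightarrow> ('b \<Rightarrow> 'b \<Rightarrow> complex) \<Rightarrow> ('a \<Rightarrow> 'b) \<Rightarrow> ('b \<Rightarrow> 'a)" where
  "hadj inA ipA inB ipB A = (SOME B. (\<forall>y. inB y \<longrightarrow> inA (B y)) \<and>
      (\<forall>x y. inA x \<longrightarrow> inB y \<longrightarrow> ipB (A x) y = ipA x (B y)))"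

definition orth_proj :: "('a::minus \<Rightarrow> 'a \<Rightarrow> complex) \<Rightarrow> 'a set \<Rightarrow> 'a \<Rightarrow> 'a" where
  "orth_proj ip S x = (THE y. y \<in> S \<and> (\<forall>s\<in>S. ip (x - y) s = 0))"

definition mult_z :: "'n \<Rightarrow> 'n coeffs \<Rightarrow> 'n coeffs" where
  "mult_z i f = (\<lambda>\<alpha>. if \<alpha> i = 0 then 0 else f (\<alpha>(i := \<alpha> i - 1)))"

definition Mz :: "('n::finite \<Rightarrow> 'n coeffs) \<Rightarrow> 'n coeffs" where
  "Mz F = (\<Sum>i\<in>UNIV. mult_z i (F i))"

definition Mz_adj :: "nat \<Rightarrow> 'n::finite coeffs \<Rightarrow> ('n \<Rightarrow> 'n coeffs)" where
  "Mz_adj m = hadj (inHn m) (innerHn m) (inH m) (innerH m) Mz"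

definition delta :: "nat \<Rightarrow> 'n::finite coeffs \<Rightarrow> 'n coeffs" where
  "delta m f = (\<lambda>\<alpha>. if mdeg \<alpha> = 0 then f \<alpha>
      else complex_of_real (real (m + mdeg \<alpha> - 1) / real (mdeg \<alpha>)) * f \<alpha>)"

definition Mz' :: "nat \<Rightarrow> ('n::finite \<Rightarrow> 'n coeffs) \<Rightarrow> 'n coeffs" where
  "Mz' m F = delta m (Mz F)"

definition Mz'_adj :: "nat \<Rightarrow> 'n::finite coeffs \<Rightarrow> ('n \<Rightarrow> 'n coeffs)" where
  "Mz'_adj m = hadj (inHn m) (innerHn m) (inH m) (innerH m) (Mz' m)"

definition range_Mz_adj :: "nat \<Rightarrow> ('n::finite \<Rightarrow> 'n coeffs) set" where
  "range_Mz_adj m = {F. inHn m F \<and>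
     (\<forall>e>0. \<exists>f. inH m f \<and> normHn m (F - Mz_adj m f) < e)}"

definition P_Im :: "nat \<Rightarrow> ('n::finite \<Rightarrow> 'n coeffs) \<Rightarrow> ('n \<Rightarrow> 'n coeffs)" where
  "P_Im m = orth_proj (innerHn m) (range_Mz_adj m)"

definition sigma_Mz :: "nat \<Rightarrow> ('n::finite coeffs \<Rightarrow> 'n coeffs) \<Rightarrow> ('n coeffs \<Rightarrow> 'n coeffs)" where
  "sigma_Mz m X = (\<lambda>f. \<Sum>i\<in>UNIV.
      mult_z i (X (hadj (inH m) (innerH m) (inH m) (innerH m) (mult_z i) f)))"

definition cprod :: "'n::finite coeffs \<Rightarrow> 'n coeffs \<Rightarrow> 'n coeffs" where
  "cprod u v = (\<lambda>\<alpha>. \<Sum>\<beta>\<in>{\<beta>. \<beta> \<le> \<alpha>}. u \<beta> * v (\<alpha> - \<beta>))"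

definition is_poly :: "'n coeffs \<Rightarrow> bool" where
  "is_poly p \<longleftrightarrow> finite {\<alpha>. p \<alpha> \<noteq> 0}"

text \<open>Adjoint T_u^* of the densely defined multiplication operator T_u with
  domain D_u = {v \<in> H_m. uv \<in> H_m}, evaluated at y (in its domain).\<close>
definition Tmult_adj :: "nat \<Rightarrow> 'n::finite coeffs \<Rightarrow> 'n coeffs \<Rightarrow> 'n coeffs" where
  "Tmult_adj m u y = (THE z. inH m z \<and> (\<forall>x. inH m x \<longrightarrow> inH m (cprod u x) \<longrightarrow>
       innerH m (cprod u x) y = innerH m x z))"

end

theory Submission
  imports Defs "HOL-Computational_Algebra.Formal_Power_Series"
begin

(* The adjoint of M_{z_i} is
   (M_{z_i}^* f)_\<alpha> = (\<alpha>_i + 1) / (m + |\<alpha>|) f_{\<alpha>+e_i}, and M_z M_z'^* is the identity on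
   functions vanishing at 0. Hence Im M_z^* is closed, P_{Im M_z^*} = M_z'^* M_z, and both sides
   of the identity are M_z'^* applied to functions that differ only by a constant, provided
   \<Delta>(T) = \<Sum>_{k=0}^m (-1)^k C(m,k) \<sigma>^k(T) maps functions vanishing at 0 to constants.
   On polynomials \<sigma>^k(T) = T_g D_k + D_k T_h^*, where D_k = \<sigma>^k(I) multiplies homogeneous
   polynomials of degree N by d_k(N) = C(m-1+N-k, N-k) / C(m-1+N, N), and
   \<Sum>_k (-1)^k C(m,k) d_k(N) = 0 for N \<ge> 1 by Vandermonde's identity. Boundedness of T
   and density of the polynomials extend this to all of H_m. *)

lemma sum_fun_apply: "(\<Sum>i\<in>I. f i) x = (\<Sum>i\<in>I. f i x)"
  by (induction I rule: infinite_finite_induct) auto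

lemma summable_on_finite_sum:
  fixes f :: "'i \<Rightarrow> 'a \<Rightarrow> 'b::{topological_comm_monoid_add, t2_space}"
  shows "finite I \<Longrightarrow> (\<And>i. i \<in> I \<Longrightarrow> f i summable_on A) \<Longrightarrow> (\<lambda>x. \<Sum>i\<in>I. f i x) summable_on A"
  by (induction I rule: finite_induct) (auto intro: summable_on_add)

lemma infsum_finite_sum:
  fixes f :: "'i \<Rightarrow> 'a \<Rightarrow> 'b::{topological_comm_monoid_add, t2_space}"
  shows "finite I \<Longrightarrow> (\<And>i. i \<in> I \<Longrightarrow> f i summable_on A) \<Longrightarrow>
    (\<Sum>\<^sub>\<infinity>x\<in>A. \<Sum>i\<in>I. f i x) = (\<Sum>i\<in>I. \<Sum>\<^sub>\<infinity>x\<in>A. f i x)"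
  by (induction I rule: finite_induct) (auto simp: infsum_add summable_on_finite_sum)

lemma norm_add_sq_le:
  fixes a b :: "'a::real_normed_vector"
  shows "(norm (a + b))\<^sup>2 \<le> 2 * (norm a)\<^sup>2 + 2 * (norm b)\<^sup>2"
proof -
  have "(norm (a + b))\<^sup>2 \<le> (norm a + norm b)\<^sup>2"
    by (simp add: norm_triangle_ineq power_mono)
  also have "\<dots> \<le> 2 * (norm a)\<^sup>2 + 2 * (norm b)\<^sup>2"
    using zero_le_square[of "norm a - norm b"] by (simp add: power2_eq_square algebra_simps)
  finally show ?thesis .
qed

lemma norm_sum_sq_le:
  fixes a :: "'i \<Rightarrow> 'a::real_normed_vector"
  shows "(norm (\<Sum>i\<in>I. a i))\<^sup>2 \<le> real (card I) * (\<Sum>i\<in>I. (norm (a i))\<^sup>2)"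
proof -
  have "(norm (\<Sum>i\<in>I. a i))\<^sup>2 \<le> (\<Sum>i\<in>I. 1 * norm (a i))\<^sup>2"
    by (simp add: norm_sum power_mono)
  also have "\<dots> \<le> (\<Sum>i\<in>I. 1\<^sup>2) * (\<Sum>i\<in>I. (norm (a i))\<^sup>2)"
    by (rule Cauchy_Schwarz_ineq_sum)
  finally show ?thesis by simp
qed

lemma two_mult_le_weighted_sq:
  fixes x y t :: real
  assumes "t > 0"
  shows "2 * (x * y) \<le> t * x\<^sup>2 + y\<^sup>2 / t"
proof -
  have "0 \<le> (t * x - y)\<^sup>2 / t" using assms by simp
  also have "\<dots> = t * x\<^sup>2 + y\<^sup>2 / t - 2 * (x * y)"
    using assms by (simp add: power2_eq_square field_simps)
  finally show ?thesis by simp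
qed

lemma nonpos_if_le_mult_all_pos:
  fixes x K :: real
  assumes "K \<ge> 0" and "\<And>e. e > 0 \<Longrightarrow> x \<le> K * e"
  shows "x \<le> 0"
proof (rule ccontr)
  assume "\<not> x \<le> 0"
  then have "x > 0" by simp
  have "x \<le> K * (x / (K + 1))" using assms \<open>x > 0\<close> by (simp del: times_divide_eq_right)
  also have "\<dots> < x" using assms(1) \<open>x > 0\<close> by (simp add: field_simps)
  finally show False by simp
qed

(* hadj is defined by choice, so it is only determined through its inner products. *)
lemma hadj_inner_eq:
  assumes "\<forall>y. inB y \<longrightarrow> inA (B y)"
    and "\<forall>x y. inA x \<longrightarrow> inB y \<longrightarrow> ipB (A x) y = ipA x (B y)"
    and "inB y"
  shows "inA (hadj inA ipA inB ipB A y)"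
    and "\<And>x. inA x \<Longrightarrow> ipA x (hadj inA ipA inB ipB A y) = ipA x (B y)"
proof -
  let ?adj = "\<lambda>B. (\<forall>y. inB y \<longrightarrow> inA (B y)) \<and> (\<forall>x y. inA x \<longrightarrow> inB y \<longrightarrow> ipB (A x) y = ipA x (B y))"
  have "?adj (hadj inA ipA inB ipB A)"
    unfolding hadj_def by (rule someI[of ?adj B]) (use assms in blast)
  then show "inA (hadj inA ipA inB ipB A y)" "\<And>x. inA x \<Longrightarrow> ipA x (hadj inA ipA inB ipB A y) = ipA x (B y)"
    using assms by metis+
qed

definition incr :: "'n \<Rightarrow> ('n \<Rightarrow> nat) \<Rightarrow> 'n \<Rightarrow> nat" where
  "incr i \<alpha> = \<alpha>(i := Suc (\<alpha> i))"

lemma incr_same [simp]: "incr i \<alpha> i = Suc (\<alpha> i)"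
  by (simp add: incr_def)

lemma inj_incr: "inj (incr i)"
  by (rule injI) (auto simp: incr_def fun_eq_iff split: if_splits)

lemma incr_neq_zero: "incr i \<alpha> \<noteq> 0"
  by (auto simp: incr_def fun_eq_iff)

lemma incr_decr: "\<alpha> i \<noteq> 0 \<Longrightarrow> incr i (\<alpha>(i := \<alpha> i - 1)) = \<alpha>"
  by (auto simp: incr_def fun_eq_iff)

lemma not_in_range_incr: "\<alpha> \<notin> range (incr i) \<Longrightarrow> \<alpha> i = 0"
  using incr_decr[of \<alpha> i] by (metis rangeI)

lemma mdeg_incr [simp]: "mdeg (incr i \<alpha>) = Suc (mdeg \<alpha>)"
proof -
  have "mdeg (incr i \<alpha>) = Suc (\<alpha> i) + (\<Sum>j\<in>UNIV - {i}. \<alpha> j)"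
    unfolding mdeg_def by (subst sum.remove[of UNIV i]) (auto simp: incr_def)
  also have "\<dots> = Suc (mdeg \<alpha>)"
    unfolding mdeg_def using sum.remove[of UNIV i \<alpha>] by simp
  finally show ?thesis .
qed

lemma component_le_mdeg: "\<alpha> i \<le> mdeg \<alpha>"
  unfolding mdeg_def by (rule member_le_sum) auto

lemma mdeg_eq_0_iff: "mdeg \<alpha> = 0 \<longleftrightarrow> \<alpha> = 0"
  unfolding mdeg_def by (auto simp: fun_eq_iff)

lemma prod_fact_incr:
  "(\<Prod>j\<in>UNIV. fact (incr i \<alpha> j) :: nat) = Suc (\<alpha> i) * (\<Prod>j\<in>(UNIV::'n::finite set). fact (\<alpha> j))"
proof -
  have "(\<Prod>j\<in>UNIV. fact (incr i \<alpha> j) :: nat) = fact (Suc (\<alpha> i)) * (\<Prod>j\<in>UNIV - {i}. fact (\<alpha> j))"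
    by (subst prod.remove[of UNIV i]) (auto simp: incr_def intro!: prod.cong)
  also have "\<dots> = Suc (\<alpha> i) * (\<Prod>j\<in>UNIV. fact (\<alpha> j))"
    by (simp only: prod.remove[of UNIV i "\<lambda>j. fact (\<alpha> j)"] finite fact_Suc UNIV_I mult.assoc of_nat_id)
  finally show ?thesis .
qed

lemma finite_multi_indices_le: "finite {\<gamma>::'n::finite \<Rightarrow> nat. \<gamma> \<le> \<alpha>}"
proof (rule finite_subset)
  show "{\<gamma>::'n \<Rightarrow> nat. \<gamma> \<le> \<alpha>} \<subseteq> PiE UNIV (\<lambda>i. {..\<alpha> i})"
    by (auto simp: le_fun_def PiE_UNIV_domain)
qed (rule finite_PiE; simp)

lemma mult_z_incr [simp]: "mult_z i f (incr i \<alpha>) = f \<alpha>"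
  by (simp add: mult_z_def incr_def)

lemma mult_z_eq_0: "\<alpha> i = 0 \<Longrightarrow> mult_z i f \<alpha> = 0"
  by (simp add: mult_z_def)

lemma mult_z_add: "mult_z i (f + g) = mult_z i f + mult_z i g"
  by (auto simp: mult_z_def fun_eq_iff)

lemma mult_z_diff: "mult_z i (f - g) = mult_z i f - mult_z i g"
  by (auto simp: mult_z_def fun_eq_iff)

lemma mult_z_smul: "mult_z i (smul c f) = smul c (mult_z i f)"
  by (auto simp: mult_z_def smul_def fun_eq_iff)

lemma mult_z_sum: "mult_z i (\<Sum>j\<in>J. f j) = (\<Sum>j\<in>J. mult_z i (f j))"
  by (auto simp: mult_z_def fun_eq_iff sum_fun_apply)

lemma smul_sum: "smul c (\<Sum>i\<in>I. f i) = (\<Sum>i\<in>I. smul c (f i))"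
  by (auto simp: smul_def fun_eq_iff sum_fun_apply sum_distrib_left)

lemma Mz_add: "Mz (\<lambda>i. F i + G i) = Mz F + Mz G"
  by (simp add: Mz_def mult_z_add sum.distrib)

lemma Mz_at_0: "Mz F (0::'n::finite \<Rightarrow> nat) = 0"
  by (simp add: Mz_def sum_fun_apply mult_z_eq_0)

lemma Mz_diff: "Mz (F - G) = Mz F - Mz G"
  by (simp add: Mz_def mult_z_diff sum_subtractf)

definition coeff_supp :: "'n coeffs \<Rightarrow> ('n \<Rightarrow> nat) set" where
  "coeff_supp p = {\<alpha>. p \<alpha> \<noteq> 0}"

definition shift_coeffs :: "('n \<Rightarrow> nat) \<Rightarrow> 'n coeffs \<Rightarrow> 'n coeffs" where
  "shift_coeffs \<gamma> g = (\<lambda>\<alpha>. if \<gamma> \<le> \<alpha> then g (\<alpha> - \<gamma>) else 0)"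

lemma shift_coeffs_0: "shift_coeffs 0 g = g"
  by (simp add: shift_coeffs_def le_fun_def)

lemma is_poly_mult_z: assumes "is_poly p" shows "is_poly (mult_z i p)"
proof -
  have "{\<alpha>. mult_z i p \<alpha> \<noteq> 0} \<subseteq> incr i ` {\<alpha>. p \<alpha> \<noteq> 0}"
  proof
    fix \<alpha> assume "\<alpha> \<in> {\<alpha>. mult_z i p \<alpha> \<noteq> 0}"
    then have "\<alpha> i \<noteq> 0" "p (\<alpha>(i := \<alpha> i - 1)) \<noteq> 0"
      unfolding mult_z_def by (auto split: if_splits)
    then show "\<alpha> \<in> incr i ` {\<alpha>. p \<alpha> \<noteq> 0}"
      using incr_decr[of \<alpha> i] by (metis (mono_tags, lifting) image_eqI mem_Collect_eq)
  qed
  then show ?thesis using assms unfolding is_poly_def by (meson finite_imageI finite_subset)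
qed

lemma is_poly_mult: "is_poly p \<Longrightarrow> is_poly (\<lambda>\<alpha>. c \<alpha> * p \<alpha>)"
  unfolding is_poly_def by (erule finite_subset[rotated]) auto

lemma multi_index_diff_diff: "\<gamma> \<le> \<alpha> \<Longrightarrow> \<alpha> - (\<alpha> - \<gamma>) = (\<gamma> :: 'n \<Rightarrow> nat)"
  by (auto simp: le_fun_def fun_eq_iff)

lemma multi_index_diff_le: "\<alpha> - \<gamma> \<le> (\<alpha> :: 'n \<Rightarrow> nat)"
  by (simp add: le_fun_def)

lemma cprod_commute_sum: "cprod u v \<alpha> = (\<Sum>\<gamma>\<in>{\<gamma>. \<gamma> \<le> \<alpha>}. u (\<alpha> - \<gamma>) * v \<gamma>)"
  unfolding cprod_def
  by (rule sum.reindex_bij_witness[of _ "\<lambda>\<beta>. \<alpha> - \<beta>" "\<lambda>\<beta>. \<alpha> - \<beta>"])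
     (auto simp: multi_index_diff_diff multi_index_diff_le)

lemma shift_coeffs_incr: "shift_coeffs (incr i \<gamma>) g = mult_z i (shift_coeffs \<gamma> g)"
proof
  fix \<alpha>
  show "shift_coeffs (incr i \<gamma>) g \<alpha> = mult_z i (shift_coeffs \<gamma> g) \<alpha>"
  proof (cases "\<alpha> i = 0")
    case True
    have "\<not> incr i \<gamma> \<le> \<alpha>"
    proof
      assume "incr i \<gamma> \<le> \<alpha>"
      then have "incr i \<gamma> i \<le> \<alpha> i" by (rule le_funD)
      with True show False by simp
    qed
    then show ?thesis using True by (simp add: shift_coeffs_def mult_z_eq_0)
  next
    case False
    then have "incr i \<gamma> j \<le> \<alpha> j \<longleftrightarrow> \<gamma> j \<le> (\<alpha>(i := \<alpha> i - 1)) j" for j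
      by (cases "j = i") (auto simp: incr_def)
    then have "incr i \<gamma> \<le> \<alpha> \<longleftrightarrow> \<gamma> \<le> \<alpha>(i := \<alpha> i - 1)"
      by (simp add: le_fun_def)
    moreover have "\<alpha> - incr i \<gamma> = \<alpha>(i := \<alpha> i - 1) - \<gamma>"
      unfolding incr_def by (auto simp: fun_eq_iff)
    ultimately show ?thesis using False by (simp add: shift_coeffs_def mult_z_def)
  qed
qed

lemma cprod_poly:
  assumes "is_poly p"
  shows "cprod g p = (\<Sum>\<gamma>\<in>coeff_supp p. smul (p \<gamma>) (shift_coeffs \<gamma> g))"
proof
  fix \<alpha>
  have fin: "finite (coeff_supp p)" using assms unfolding is_poly_def coeff_supp_def .
  have "cprod g p \<alpha> = (\<Sum>\<gamma>\<in>{\<gamma>. \<gamma> \<le> \<alpha>} \<inter> coeff_supp p. g (\<alpha> - \<gamma>) * p \<gamma>)"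
    unfolding cprod_commute_sum
    by (rule sum.mono_neutral_right) (auto simp: finite_multi_indices_le coeff_supp_def)
  also have "\<dots> = (\<Sum>\<gamma>\<in>coeff_supp p. if \<gamma> \<le> \<alpha> then p \<gamma> * g (\<alpha> - \<gamma>) else 0)"
    by (subst sum.inter_filter[OF fin, symmetric]) (auto intro: sum.cong simp: Int_def mult.commute)
  also have "\<dots> = (\<Sum>\<gamma>\<in>coeff_supp p. smul (p \<gamma>) (shift_coeffs \<gamma> g)) \<alpha>"
    unfolding sum_fun_apply smul_def shift_coeffs_def by (rule sum.cong) simp_all
  finally show "cprod g p \<alpha> = (\<Sum>\<gamma>\<in>coeff_supp p. smul (p \<gamma>) (shift_coeffs \<gamma> g)) \<alpha>" .
qed

lemma cprod_mult_z: "mult_z i (cprod g a) = cprod g (mult_z i a)"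
proof
  fix \<alpha>
  show "mult_z i (cprod g a) \<alpha> = cprod g (mult_z i a) \<alpha>"
  proof (cases "\<alpha> i = 0")
    case True
    then show ?thesis unfolding cprod_def by (auto intro: sum.neutral simp: mult_z_eq_0)
  next
    case False
    define \<alpha>' where "\<alpha>' = \<alpha>(i := \<alpha> i - 1)"
    have "{\<beta>. \<beta> \<le> \<alpha>'} \<subseteq> {\<beta>. \<beta> \<le> \<alpha>}"
      unfolding \<alpha>'_def le_fun_def by (auto intro: order_trans)
    moreover have "mult_z i a (\<alpha> - \<beta>) = 0" if le: "\<beta> \<le> \<alpha>" and not_le: "\<not> \<beta> \<le> \<alpha>'" for \<beta>
    proof -
      obtain j where j: "\<not> \<beta> j \<le> \<alpha>' j" using not_le by (auto simp: le_fun_def)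
      moreover have "\<beta> j \<le> \<alpha> j" using le by (rule le_funD)
      ultimately have "j = i" "\<beta> i = \<alpha> i" by (auto simp: \<alpha>'_def split: if_splits)
      then show ?thesis by (simp add: mult_z_eq_0)
    qed
    moreover have "mult_z i a (\<alpha> - \<beta>) = a (\<alpha>' - \<beta>)" if "\<beta> \<le> \<alpha>'" for \<beta>
    proof -
      have "\<beta> i \<le> \<alpha>' i" using that by (rule le_funD)
      then have "\<beta> i < \<alpha> i" using False by (simp add: \<alpha>'_def)
      moreover have "(\<alpha> - \<beta>)(i := (\<alpha> - \<beta>) i - 1) = \<alpha>' - \<beta>"
        unfolding \<alpha>'_def by (auto simp: fun_eq_iff)
      ultimately show ?thesis unfolding mult_z_def by simp
    qed
    ultimately have "(\<Sum>\<beta>\<in>{\<beta>. \<beta> \<le> \<alpha>'}. g \<beta> * a (\<alpha>' - \<beta>)) = (\<Sum>\<beta>\<in>{\<beta>. \<beta> \<le> \<alpha>}. g \<beta> * mult_z i a (\<alpha> - \<beta>))"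
      by (intro sum.mono_neutral_cong_left finite_multi_indices_le) auto
    then show ?thesis using False unfolding cprod_def mult_z_def \<alpha>'_def by simp
  qed
qed

lemma cprod_add: "cprod g (a + b) = cprod g a + cprod g b"
  unfolding cprod_def by (auto simp: fun_eq_iff distrib_left sum.distrib)

lemma cprod_smul: "cprod g (smul c a) = smul c (cprod g a)"
  unfolding cprod_def smul_def by (auto simp: fun_eq_iff sum_distrib_left mult_ac)

lemma cprod_sum: "finite I \<Longrightarrow> cprod g (\<Sum>i\<in>I. f i) = (\<Sum>i\<in>I. cprod g (f i))"
proof (induction I rule: finite_induct)
  case empty
  show ?case by (simp add: cprod_def fun_eq_iff)
next
  case (insert x F)
  then show ?case by (simp only: sum.insert[OF insert.hyps] cprod_add insert.IH)
qed

lemma sum_alternating_binomial_shift: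
  fixes x :: "nat \<Rightarrow> 'a::comm_ring_1"
  shows "(\<Sum>k\<le>m. of_int ((-1) ^ k) * of_nat (m choose k) * x k) =
    x 0 - (\<Sum>j<m. of_int ((-1) ^ j) * of_nat (m choose (j + 1)) * x (Suc j))"
  by (simp add: sum.atMost_shift sum_negf)

(* The eigenvalue of \<sigma>^k(I) on the homogeneous polynomials of degree N. *)
fun sigma_weight :: "nat \<Rightarrow> nat \<Rightarrow> nat \<Rightarrow> real" where
  "sigma_weight m 0 N = 1"
| "sigma_weight m (Suc k) N = sigma_weight m k (N - 1) * (real N / real (m + N - 1))"

lemma sigma_weight_closed_form:
  assumes "1 \<le> m"
  shows "sigma_weight m k N =
    (if k \<le> N then real ((m - 1 + N - k) choose (N - k)) / real ((m - 1 + N) choose N) else 0)"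
proof (induction k arbitrary: N)
  case 0
  have "(m - 1 + N) choose N > 0" by simp
  then show ?case by simp
next
  case (Suc k)
  show ?case
  proof (cases N)
    case (Suc N')
    have "Suc (m - 1 + N') = m + N'" using assms by simp
    then have "(m + N') * ((m - 1 + N') choose N') = ((m + N') choose Suc N') * Suc N'"
      using Suc_times_binomial_eq[of "m - 1 + N'" N'] by simp
    then have "real (m + N') * real ((m - 1 + N') choose N') = real ((m + N') choose Suc N') * real (Suc N')"
      by (metis of_nat_mult)
    moreover have frac: "a / B * (s / q) = a / E" if "B > 0" "s > 0" "q * B = E * s" for a B q E s :: real
    proof -
      have "a / B * (s / q) = a * s / (q * B)" by (simp add: field_simps)
      also have "\<dots> = a / E" using that by simp
      finally show ?thesis .
    qed
    ultimately have "a / real ((m - 1 + N') choose N') * (real (Suc N') / real (m + N')) =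
        a / real ((m + N') choose Suc N')" for a
      by (intro frac) simp_all
    then show ?thesis
      using Suc.IH[of N'] \<open>N = Suc N'\<close> assms by (simp add: Suc_diff_le)
  qed simp
qed

(* The sum is the coefficient of x^N in (1 - x)^m (1 - x)^-m = 1. *)
lemma alternating_sum_sigma_weight:
  assumes "1 \<le> m" "1 \<le> N"
  shows "(\<Sum>k\<le>m. (-1) ^ k * real (m choose k) * sigma_weight m k N) = 0"
proof -
  define A where "A k = (-1) ^ k * real (m choose k) * real ((m - 1 + N - k) choose (N - k))" for k
  have "(\<Sum>k=0..N. (real m gchoose k) * ((- real m) gchoose (N - k))) = 0"
    using gbinomial_Vandermonde[of "real m" "- real m" N] assms(2) by (simp add: gbinomial_0_left)
  moreover have "(real m gchoose k) * ((- real m) gchoose (N - k)) = (-1) ^ N * A k" if "k \<le> N" for k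
  proof -
    have "real m + real (N - k) - 1 = real (m - 1 + N - k)"
      using assms that by (simp add: of_nat_diff)
    then have "(- real m) gchoose (N - k) = (-1) ^ (N - k) * real ((m - 1 + N - k) choose (N - k))"
      by (simp add: gbinomial_minus binomial_gbinomial)
    moreover have "(-1::real) ^ (N - k) = (-1) ^ N * (-1) ^ k"
      using that by (simp add: power_diff_conv_inverse)
    ultimately show ?thesis by (simp add: A_def binomial_gbinomial)
  qed
  ultimately have sum_A: "(\<Sum>k=0..N. A k) = 0"
    by (simp add: sum_distrib_left[symmetric])
  have "(\<Sum>k\<le>m. (-1) ^ k * real (m choose k) * sigma_weight m k N) =
      (\<Sum>k\<le>m. if k \<le> N then A k / real ((m - 1 + N) choose N) else 0)"
    by (rule sum.cong[OF refl]) (simp add: sigma_weight_closed_form[OF assms(1)] A_def)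
  also have "\<dots> = (\<Sum>k\<in>{..m} \<inter> {..N}. A k / real ((m - 1 + N) choose N))"
    by (subst sum.inter_filter[symmetric]) (auto intro!: sum.cong)
  also have "\<dots> = (\<Sum>k=0..N. A k / real ((m - 1 + N) choose N))"
    by (rule sum.mono_neutral_left) (auto simp: A_def)
  also have "\<dots> = (\<Sum>k=0..N. A k) / real ((m - 1 + N) choose N)"
    by (simp add: sum_divide_distrib)
  finally show ?thesis using sum_A by simp
qed

section \<open>The space H_m\<close>

context
  fixes m :: nat
  assumes m_pos: "1 \<le> m"
begin

lemma rho_pos: "rho m \<alpha> > 0"
  unfolding rho_def by (auto intro!: divide_pos_pos mult_pos_pos simp: prod_pos)

lemma rho_incr: "rho m (incr i \<alpha>) = rho m \<alpha> * real (m + mdeg \<alpha>) / real (Suc (\<alpha> i))"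
proof -
  have "fact (m + mdeg \<alpha>) = real (m + mdeg \<alpha>) * fact (m + mdeg \<alpha> - 1)"
    using m_pos by (metis Suc_diff_1 add_gr_0 fact_Suc less_le_trans of_nat_mult zero_less_one fact_reduce)
  then show ?thesis
    unfolding rho_def using m_pos
    by (simp add: prod_fact_incr field_simps del: of_nat_Suc) (simp add: algebra_simps)
qed

lemma rho_le_rho_incr: "rho m \<alpha> \<le> rho m (incr i \<alpha>)"
proof -
  have "real (Suc (\<alpha> i)) \<le> real (m + mdeg \<alpha>)" using component_le_mdeg[of \<alpha> i] m_pos by simp
  then have "rho m \<alpha> * real (Suc (\<alpha> i)) \<le> rho m \<alpha> * real (m + mdeg \<alpha>)"
    using rho_pos[of \<alpha>] by (intro mult_left_mono) auto
  then show ?thesis unfolding rho_incr by (simp add: pos_le_divide_eq del: of_nat_Suc)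
qed

lemma sq_coeff_nonneg [simp]: "0 \<le> (cmod (f \<alpha>))\<^sup>2 / rho m \<alpha>"
  using rho_pos[of \<alpha>] by simp

definition sqnormH :: "'n::finite coeffs \<Rightarrow> real" where
  "sqnormH f = (\<Sum>\<^sub>\<infinity>\<alpha>. (cmod (f \<alpha>))\<^sup>2 / rho m \<alpha>)"

definition monomial_coeffs :: "('n \<Rightarrow> nat) \<Rightarrow> 'n coeffs" where
  "monomial_coeffs \<beta> = (\<lambda>\<alpha>. if \<alpha> = \<beta> then 1 else 0)"

lemma sqnormH_nonneg: "sqnormH f \<ge> 0"
  unfolding sqnormH_def by (rule infsum_nonneg) simp

lemma inH_add: assumes "inH m f" "inH m g" shows "inH m (f + g)"
  unfolding inH_def
proof (rule summable_on_comparison_test)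
  show "(\<lambda>\<alpha>. 2 * ((cmod (f \<alpha>))\<^sup>2 / rho m \<alpha>) + 2 * ((cmod (g \<alpha>))\<^sup>2 / rho m \<alpha>)) summable_on UNIV"
    using assms unfolding inH_def by (intro summable_on_add summable_on_cmult_right)
  fix \<alpha>
  have "(cmod ((f + g) \<alpha>))\<^sup>2 / rho m \<alpha> \<le> (2 * (cmod (f \<alpha>))\<^sup>2 + 2 * (cmod (g \<alpha>))\<^sup>2) / rho m \<alpha>"
    using norm_add_sq_le[of "f \<alpha>" "g \<alpha>"] rho_pos[of \<alpha>] by (intro divide_right_mono) auto
  then show "(cmod ((f + g) \<alpha>))\<^sup>2 / rho m \<alpha> \<le> 2 * ((cmod (f \<alpha>))\<^sup>2 / rho m \<alpha>) + 2 * ((cmod (g \<alpha>))\<^sup>2 / rho m \<alpha>)"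
    by (simp add: add_divide_distrib)
qed (rule sq_coeff_nonneg)

lemma inH_smul: assumes "inH m f" shows "inH m (smul c f)"
proof -
  have "(\<lambda>\<alpha>. (cmod c)\<^sup>2 * ((cmod (f \<alpha>))\<^sup>2 / rho m \<alpha>)) summable_on UNIV"
    using assms unfolding inH_def by (intro summable_on_cmult_right)
  then show ?thesis unfolding inH_def smul_def by (simp add: norm_mult power_mult_distrib)
qed

lemma inH_diff: assumes "inH m f" "inH m g" shows "inH m (f - g)"
proof -
  have "f - g = f + smul (-1) g" by (simp add: smul_def fun_eq_iff)
  then show ?thesis using inH_add[OF assms(1) inH_smul[OF assms(2), of "-1"]] by (simp only:)
qed

lemma inH_zero: "inH m 0"
  by (simp add: inH_def)

lemma inH_sum: "finite I \<Longrightarrow> (\<And>i. i \<in> I \<Longrightarrow> inH m (f i)) \<Longrightarrow> inH m (\<Sum>i\<in>I. f i)"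
  by (induction I rule: finite_induct) (auto intro: inH_add inH_zero)

lemma inH_poly: "is_poly p \<Longrightarrow> inH m p"
  unfolding is_poly_def inH_def
  by (rule finite_nonzero_values_imp_summable_on) (erule finite_subset[rotated], auto)

lemma is_poly_monomial_coeffs: "is_poly (monomial_coeffs \<beta>)"
  by (simp add: is_poly_def monomial_coeffs_def)

lemma inH_monomial_coeffs: "inH m (monomial_coeffs \<beta>)"
  by (rule inH_poly[OF is_poly_monomial_coeffs])

lemma innerH_summable:
  assumes "inH m f" "inH m g"
  shows "(\<lambda>\<alpha>. f \<alpha> * cnj (g \<alpha>) / complex_of_real (rho m \<alpha>)) summable_on UNIV"
proof -
  have "(\<lambda>\<alpha>. norm (f \<alpha> * cnj (g \<alpha>) / complex_of_real (rho m \<alpha>))) summable_on UNIV"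
  proof (rule summable_on_comparison_test)
    show "(\<lambda>\<alpha>. (cmod (f \<alpha>))\<^sup>2 / rho m \<alpha> + (cmod (g \<alpha>))\<^sup>2 / rho m \<alpha>) summable_on UNIV"
      using assms unfolding inH_def by (intro summable_on_add)
    fix \<alpha>
    have "2 * (cmod (f \<alpha>) * cmod (g \<alpha>)) \<le> 1 * (cmod (f \<alpha>))\<^sup>2 + (cmod (g \<alpha>))\<^sup>2 / 1"
      by (rule two_mult_le_weighted_sq) simp
    moreover have "0 \<le> cmod (f \<alpha>) * cmod (g \<alpha>)" by simp
    ultimately have "cmod (f \<alpha>) * cmod (g \<alpha>) \<le> (cmod (f \<alpha>))\<^sup>2 + (cmod (g \<alpha>))\<^sup>2" by linarith
    then have "cmod (f \<alpha>) * cmod (g \<alpha>) / rho m \<alpha> \<le> ((cmod (f \<alpha>))\<^sup>2 + (cmod (g \<alpha>))\<^sup>2) / rho m \<alpha>"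
      using rho_pos[of \<alpha>] by (intro divide_right_mono) auto
    then show "norm (f \<alpha> * cnj (g \<alpha>) / complex_of_real (rho m \<alpha>))
        \<le> (cmod (f \<alpha>))\<^sup>2 / rho m \<alpha> + (cmod (g \<alpha>))\<^sup>2 / rho m \<alpha>"
      using rho_pos[of \<alpha>] by (simp add: norm_mult norm_divide add_divide_distrib)
  qed simp
  then show ?thesis using summable_on_iff_abs_summable_on_complex by blast
qed

lemma innerH_commute: "innerH m g f = cnj (innerH m f g)"
  unfolding innerH_def infsum_cnj[symmetric] by (simp add: mult.commute)

lemma innerH_add_left:
  assumes "inH m f" "inH m g" "inH m k"
  shows "innerH m (f + g) k = innerH m f k + innerH m g k"
  unfolding innerH_def
  by (subst infsum_add[symmetric])
     (auto intro!: innerH_summable assms infsum_cong simp: add_divide_distrib distrib_right)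

lemma innerH_smul_left: "innerH m (smul c f) g = c * innerH m f g"
  unfolding innerH_def smul_def
  by (subst infsum_cmult_right'[symmetric]) (simp add: mult_ac)

lemma innerH_diff_left:
  assumes "inH m f" "inH m g" "inH m k"
  shows "innerH m (f - g) k = innerH m f k - innerH m g k"
proof -
  have "innerH m (f + smul (-1) g) k = innerH m f k - innerH m g k"
    using innerH_add_left[OF assms(1) inH_smul[OF assms(2)] assms(3), of "-1"]
    by (simp add: innerH_smul_left)
  moreover have "f + smul (-1) g = f - g" by (simp add: smul_def fun_eq_iff)
  ultimately show ?thesis by simp
qed

lemma innerH_diff_right:
  assumes "inH m f" "inH m g" "inH m k"
  shows "innerH m k (f - g) = innerH m k f - innerH m k g"
  using innerH_diff_left[OF assms] by (metis complex_cnj_diff innerH_commute)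

lemma innerH_smul_right: "innerH m g (smul c f) = cnj c * innerH m g f"
  unfolding innerH_def smul_def
  by (subst infsum_cmult_right'[symmetric]) (simp add: mult_ac)

lemma innerH_zero_left: "innerH m 0 g = 0"
  unfolding innerH_def by simp

lemma innerH_sum_left:
  "finite I \<Longrightarrow> (\<And>i. i \<in> I \<Longrightarrow> inH m (f i)) \<Longrightarrow> inH m k \<Longrightarrow>
    innerH m (\<Sum>i\<in>I. f i) k = (\<Sum>i\<in>I. innerH m (f i) k)"
  by (induction I rule: finite_induct) (auto simp: innerH_zero_left innerH_add_left inH_sum)

lemma innerH_self: assumes "inH m f" shows "innerH m f f = complex_of_real (sqnormH f)"
proof -
  have "innerH m f f = (\<Sum>\<^sub>\<infinity>\<alpha>. complex_of_real ((cmod (f \<alpha>))\<^sup>2 / rho m \<alpha>))"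
    unfolding innerH_def by (rule infsum_cong) (simp only: of_real_divide complex_norm_square)
  also have "\<dots> = complex_of_real (sqnormH f)"
    unfolding sqnormH_def using assms unfolding inH_def
    by (intro infsumI has_sum_of_real has_sum_infsum)
  finally show ?thesis .
qed

lemma normH_eq_sqrt_sqnormH: "inH m f \<Longrightarrow> normH m f = sqrt (sqnormH f)"
  unfolding normH_def by (simp add: innerH_self)

lemma sqnormH_eq_0_iff: assumes "inH m f" shows "sqnormH f = 0 \<longleftrightarrow> f = 0"
proof
  assume "sqnormH f = 0"
  have coeff_0: "(cmod (f \<alpha>))\<^sup>2 / rho m \<alpha> = 0" for \<alpha>
    by (rule nonneg_infsum_le_0D[where f = "\<lambda>\<alpha>. (cmod (f \<alpha>))\<^sup>2 / rho m \<alpha>" and A = UNIV])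
       (use assms \<open>sqnormH f = 0\<close> in \<open>auto simp: sqnormH_def inH_def\<close>)
  have "f \<alpha> = 0" for \<alpha> using coeff_0[of \<alpha>] rho_pos[of \<alpha>] by simp
  then show "f = 0" by (simp add: fun_eq_iff)
qed (simp add: sqnormH_def)

lemma innerH_monomial_coeffs_right: "innerH m f (monomial_coeffs \<beta>) = f \<beta> / complex_of_real (rho m \<beta>)"
proof -
  have "innerH m f (monomial_coeffs \<beta>) =
      (\<Sum>\<^sub>\<infinity>\<alpha>\<in>{\<beta>}. f \<alpha> * cnj (monomial_coeffs \<beta> \<alpha>) / complex_of_real (rho m \<alpha>))"
    unfolding innerH_def by (rule infsum_cong_neutral) (auto simp: monomial_coeffs_def)
  then show ?thesis by (simp add: monomial_coeffs_def)
qed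

lemma innerH_monomial_coeffs_left: "innerH m (monomial_coeffs \<beta>) f = cnj (f \<beta>) / complex_of_real (rho m \<beta>)"
  by (simp add: innerH_commute[of _ f] innerH_monomial_coeffs_right)

lemma coeffs_eqI: assumes "\<And>x. inH m x \<Longrightarrow> innerH m x u = innerH m x v" shows "u = v"
proof
  fix \<beta>
  show "u \<beta> = v \<beta>"
    using assms[OF inH_monomial_coeffs[of \<beta>]] rho_pos[of \<beta>] by (simp add: innerH_monomial_coeffs_left)
qed

lemma norm_coeff_le: assumes "inH m f" shows "cmod (f \<beta>) \<le> sqrt (rho m \<beta>) * normH m f"
proof -
  have "(cmod (f \<beta>))\<^sup>2 / rho m \<beta> \<le> sqnormH f"
    using finite_sum_le_infsum[of "\<lambda>\<alpha>. (cmod (f \<alpha>))\<^sup>2 / rho m \<alpha>" UNIV "{\<beta>}"] assms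
    by (simp add: sqnormH_def inH_def)
  then have "(cmod (f \<beta>))\<^sup>2 \<le> rho m \<beta> * sqnormH f"
    using rho_pos[of \<beta>] by (simp add: field_simps)
  then have "sqrt ((cmod (f \<beta>))\<^sup>2) \<le> sqrt (rho m \<beta> * sqnormH f)"
    using real_sqrt_le_mono by blast
  then show ?thesis by (simp add: normH_eq_sqrt_sqnormH[OF assms] real_sqrt_mult)
qed

lemma innerH_weighted_bound:
  assumes "inH m f" "inH m g" "t > 0"
  shows "2 * cmod (innerH m f g) \<le> t * sqnormH f + sqnormH g / t"
proof -
  let ?w = "\<lambda>\<alpha>. t * ((cmod (f \<alpha>))\<^sup>2 / rho m \<alpha>) + (1 / t) * ((cmod (g \<alpha>))\<^sup>2 / rho m \<alpha>)"
  have abs: "(\<lambda>\<alpha>. norm (f \<alpha> * cnj (g \<alpha>) / complex_of_real (rho m \<alpha>))) summable_on UNIV"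
    using summable_on_iff_abs_summable_on_complex[THEN iffD1, OF innerH_summable[OF assms(1,2)]] by simp
  have w: "?w summable_on UNIV"
    using assms unfolding inH_def by (intro summable_on_add summable_on_cmult_right)
  have "2 * cmod (innerH m f g) \<le> 2 * (\<Sum>\<^sub>\<infinity>\<alpha>. norm (f \<alpha> * cnj (g \<alpha>) / complex_of_real (rho m \<alpha>)))"
    unfolding innerH_def using norm_infsum_bound[OF abs] by simp
  also have "\<dots> = (\<Sum>\<^sub>\<infinity>\<alpha>. 2 * norm (f \<alpha> * cnj (g \<alpha>) / complex_of_real (rho m \<alpha>)))"
    by (rule infsum_cmult_right'[symmetric])
  also have "\<dots> \<le> (\<Sum>\<^sub>\<infinity>\<alpha>. ?w \<alpha>)"
  proof (rule infsum_mono[OF summable_on_cmult_right[OF abs] w])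
    fix \<alpha>
    have "2 * (cmod (f \<alpha>) * cmod (g \<alpha>)) / rho m \<alpha> \<le> (t * (cmod (f \<alpha>))\<^sup>2 + (cmod (g \<alpha>))\<^sup>2 / t) / rho m \<alpha>"
      using two_mult_le_weighted_sq[OF assms(3)] rho_pos[of \<alpha>] by (intro divide_right_mono) auto
    then show "2 * norm (f \<alpha> * cnj (g \<alpha>) / complex_of_real (rho m \<alpha>)) \<le> ?w \<alpha>"
      using rho_pos[of \<alpha>] assms(3) by (simp add: norm_mult norm_divide field_simps)
  qed
  also have "\<dots> = t * sqnormH f + (1 / t) * sqnormH g"
    using assms unfolding sqnormH_def inH_def
    by (simp only: infsum_add summable_on_cmult_right infsum_cmult_right')
  finally show ?thesis by simp
qed

lemma sqnormH_sum_le: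
  assumes "finite I" "\<And>i. i \<in> I \<Longrightarrow> inH m (f i)"
  shows "sqnormH (\<Sum>i\<in>I. f i) \<le> real (card I) * (\<Sum>i\<in>I. sqnormH (f i))"
proof -
  have s: "(\<lambda>\<alpha>. (cmod (f i \<alpha>))\<^sup>2 / rho m \<alpha>) summable_on UNIV" if "i \<in> I" for i
    using assms(2)[OF that] unfolding inH_def .
  have "sqnormH (\<Sum>i\<in>I. f i) \<le> (\<Sum>\<^sub>\<infinity>\<alpha>. real (card I) * (\<Sum>i\<in>I. (cmod (f i \<alpha>))\<^sup>2 / rho m \<alpha>))"
    unfolding sqnormH_def
  proof (rule infsum_mono)
    show "(\<lambda>\<alpha>. (cmod ((\<Sum>i\<in>I. f i) \<alpha>))\<^sup>2 / rho m \<alpha>) summable_on UNIV"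
      using inH_sum[OF assms] unfolding inH_def .
    show "(\<lambda>\<alpha>. real (card I) * (\<Sum>i\<in>I. (cmod (f i \<alpha>))\<^sup>2 / rho m \<alpha>)) summable_on UNIV"
      using s assms(1) by (intro summable_on_cmult_right summable_on_finite_sum) auto
    show "(cmod ((\<Sum>i\<in>I. f i) \<alpha>))\<^sup>2 / rho m \<alpha> \<le> real (card I) * (\<Sum>i\<in>I. (cmod (f i \<alpha>))\<^sup>2 / rho m \<alpha>)"
      for \<alpha>
    proof -
      have "(cmod ((\<Sum>i\<in>I. f i) \<alpha>))\<^sup>2 / rho m \<alpha> \<le> real (card I) * (\<Sum>i\<in>I. (cmod (f i \<alpha>))\<^sup>2) / rho m \<alpha>"
        using norm_sum_sq_le[of "\<lambda>i. f i \<alpha>" I] rho_pos[of \<alpha>]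
        by (intro divide_right_mono) (auto simp: sum_fun_apply)
      then show ?thesis by (simp add: sum_divide_distrib[symmetric])
    qed
  qed
  also have "\<dots> = real (card I) * (\<Sum>i\<in>I. sqnormH (f i))"
    unfolding sqnormH_def using s assms(1) by (simp add: infsum_cmult_right' infsum_finite_sum)
  finally show ?thesis .
qed

definition mult_z_adj :: "'n \<Rightarrow> 'n::finite coeffs \<Rightarrow> 'n coeffs" where
  "mult_z_adj i f = (\<lambda>\<alpha>. f (incr i \<alpha>) * complex_of_real (real (Suc (\<alpha> i)) / real (m + mdeg \<alpha>)))"

lemma mult_z_bounded:
  assumes "inH m f"
  shows "inH m (mult_z i f)" and "sqnormH (mult_z i f) \<le> sqnormH f"
proof -
  let ?\<phi> = "\<lambda>\<alpha>. (cmod (mult_z i f \<alpha>))\<^sup>2 / rho m \<alpha>"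
  let ?\<psi> = "\<lambda>\<alpha>. (cmod (f \<alpha>))\<^sup>2 / rho m \<alpha>"
  have le: "(?\<phi> \<circ> incr i) \<alpha> \<le> ?\<psi> \<alpha>" for \<alpha>
    using rho_le_rho_incr[of \<alpha> i] rho_pos[of \<alpha>] by (auto intro!: divide_left_mono)
  have nonneg: "0 \<le> (?\<phi> \<circ> incr i) \<alpha>" for \<alpha>
    using rho_pos[of "incr i \<alpha>"] by simp
  have s: "(?\<phi> \<circ> incr i) summable_on UNIV"
    by (rule summable_on_comparison_test[OF assms[unfolded inH_def]]) (simp_all only: le nonneg)
  have "?\<phi> summable_on range (incr i)"
    unfolding summable_on_reindex[OF inj_incr] by (rule s)
  then show "inH m (mult_z i f)"
    unfolding inH_def by (subst summable_on_cong_neutral[where T = "range (incr i)"])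
      (auto dest: not_in_range_incr simp: mult_z_eq_0)
  have "sqnormH (mult_z i f) = (\<Sum>\<^sub>\<infinity>\<alpha>\<in>range (incr i). ?\<phi> \<alpha>)"
    unfolding sqnormH_def by (rule infsum_cong_neutral) (auto dest: not_in_range_incr simp: mult_z_eq_0)
  also have "\<dots> = (\<Sum>\<^sub>\<infinity>\<alpha>. (?\<phi> \<circ> incr i) \<alpha>)"
    by (rule infsum_reindex[OF inj_incr])
  also have "\<dots> \<le> sqnormH f"
    unfolding sqnormH_def by (rule infsum_mono[OF s assms[unfolded inH_def]]) (rule le)
  finally show "sqnormH (mult_z i f) \<le> sqnormH f" .
qed

lemma sq_coeff_mult_z_adj:
  "(cmod (mult_z_adj i g \<alpha>))\<^sup>2 / rho m \<alpha> =
    (cmod (g (incr i \<alpha>)))\<^sup>2 / rho m (incr i \<alpha>) * (real (Suc (\<alpha> i)) / real (m + mdeg \<alpha>))"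
proof -
  have eq: "(x * (r / M))\<^sup>2 / \<rho> = x\<^sup>2 / (\<rho> * M / r) * (r / M)"
    if "M > 0" "\<rho> > 0" "r > 0" for x r M \<rho> :: real
    using that by (simp add: power2_eq_square divide_simps)
  have norm: "cmod (mult_z_adj i g \<alpha>) = cmod (g (incr i \<alpha>)) * (real (Suc (\<alpha> i)) / real (m + mdeg \<alpha>))"
    unfolding mult_z_adj_def norm_mult norm_of_real by simp
  have "0 < real (m + mdeg \<alpha>)" using m_pos by simp
  then show ?thesis
    unfolding rho_incr norm by (rule eq) (simp_all add: rho_pos)
qed

lemma mult_z_adj_bounded:
  fixes f :: "'n::finite coeffs"
  assumes "inH m f"
  shows "inH m (mult_z_adj i f)" and "sqnormH (mult_z_adj i f) \<le> sqnormH f"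
proof -
  let ?\<phi> = "\<lambda>\<alpha>. (cmod (mult_z_adj i f \<alpha>))\<^sup>2 / rho m \<alpha>"
  let ?\<psi> = "\<lambda>\<alpha>. (cmod (f \<alpha>))\<^sup>2 / rho m \<alpha>"
  have le: "?\<phi> \<alpha> \<le> (?\<psi> \<circ> incr i) \<alpha>" for \<alpha> :: "'n \<Rightarrow> nat"
  proof -
    have "real (Suc (\<alpha> i)) / real (m + mdeg \<alpha>) \<le> 1"
      using component_le_mdeg[of \<alpha> i] m_pos by simp
    then show ?thesis unfolding sq_coeff_mult_z_adj o_def by (intro mult_left_le) auto
  qed
  have s0: "?\<psi> summable_on range (incr i)"
    by (rule summable_on_subset[OF assms[unfolded inH_def]]) auto
  have s: "(?\<psi> \<circ> incr i) summable_on UNIV"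
    using s0 unfolding summable_on_reindex[OF inj_incr] .
  show "inH m (mult_z_adj i f)"
    unfolding inH_def by (rule summable_on_comparison_test[OF s]) (use le in auto)
  then have "sqnormH (mult_z_adj i f) \<le> (\<Sum>\<^sub>\<infinity>\<alpha>. (?\<psi> \<circ> incr i) \<alpha>)"
    unfolding sqnormH_def inH_def by (rule infsum_mono[OF _ s]) (use le in auto)
  also have "\<dots> = (\<Sum>\<^sub>\<infinity>\<alpha>\<in>range (incr i). ?\<psi> \<alpha>)"
    by (rule infsum_reindex[OF inj_incr, symmetric])
  also have "\<dots> \<le> sqnormH f"
    unfolding sqnormH_def by (rule infsum_mono2[OF s0 assms[unfolded inH_def]]) auto
  finally show "sqnormH (mult_z_adj i f) \<le> sqnormH f" .
qed

lemmas inH_mult_z = mult_z_bounded(1) and inH_mult_z_adj = mult_z_adj_bounded(1)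

lemma innerH_mult_z:
  fixes f g :: "'n::finite coeffs"
  shows "innerH m (mult_z i f) g = innerH m f (mult_z_adj i g)"
proof -
  let ?\<phi> = "\<lambda>\<alpha>. mult_z i f \<alpha> * cnj (g \<alpha>) / complex_of_real (rho m \<alpha>)"
  have "innerH m (mult_z i f) g = (\<Sum>\<^sub>\<infinity>\<alpha>\<in>range (incr i). ?\<phi> \<alpha>)"
    unfolding innerH_def
    by (rule infsum_cong_neutral) (auto dest: not_in_range_incr simp: mult_z_eq_0)
  also have "\<dots> = (\<Sum>\<^sub>\<infinity>\<alpha>. (?\<phi> \<circ> incr i) \<alpha>)"
    by (rule infsum_reindex[OF inj_incr])
  also have "\<dots> = innerH m f (mult_z_adj i g)"
    unfolding innerH_def
  proof (rule infsum_cong)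
    fix \<alpha> :: "'n \<Rightarrow> nat"
    have "real (m + mdeg \<alpha>) > 0" using m_pos by simp
    then show "(?\<phi> \<circ> incr i) \<alpha> = f \<alpha> * cnj (mult_z_adj i g \<alpha>) / complex_of_real (rho m \<alpha>)"
      unfolding mult_z_adj_def o_def rho_incr using rho_pos[of \<alpha>]
      by (simp add: field_simps del: of_nat_Suc)
  qed
  finally show ?thesis .
qed

lemma hadj_mult_z: "inH m g \<Longrightarrow> hadj (inH m) (innerH m) (inH m) (innerH m) (mult_z i) g = mult_z_adj i g"
  by (rule coeffs_eqI, rule hadj_inner_eq(2)[where B = "mult_z_adj i"])
     (auto simp: inH_mult_z_adj innerH_mult_z)

lemma inH_Mz: "inHn m F \<Longrightarrow> inH m (Mz F)"
  unfolding Mz_def inHn_def by (intro inH_sum inH_mult_z) auto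

lemma innerH_Mz:
  "inHn m F \<Longrightarrow> inH m g \<Longrightarrow> innerH m (Mz F) g = innerHn m F (\<lambda>i. mult_z_adj i g)"
  unfolding Mz_def innerHn_def inHn_def
  by (subst innerH_sum_left) (auto intro: inH_mult_z simp: innerH_mult_z)

lemma coeffs_vec_eqI:
  fixes U V :: "'n::finite \<Rightarrow> 'n coeffs"
  assumes "\<And>X. inHn m X \<Longrightarrow> innerHn m X U = innerHn m X V"
  shows "U = V"
proof
  fix i
  show "U i = V i"
  proof (rule coeffs_eqI)
    fix x :: "'n coeffs" assume "inH m x"
    then have "inHn m (\<lambda>j. if j = i then x else 0)"
      by (auto simp: inHn_def inH_zero)
    moreover have "innerHn m (\<lambda>j. if j = i then x else 0) W = innerH m x (W i)" for W
    proof -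
      have "innerHn m (\<lambda>j. if j = i then x else 0) W = (\<Sum>j\<in>UNIV. if j = i then innerH m x (W j) else 0)"
        unfolding innerHn_def by (rule sum.cong) (auto simp: innerH_zero_left)
      then show ?thesis by simp
    qed
    ultimately show "innerH m x (U i) = innerH m x (V i)" using assms by metis
  qed
qed

lemma Mz_adj_eq: "inH m g \<Longrightarrow> Mz_adj m g = (\<lambda>i. mult_z_adj i g)"
  unfolding Mz_adj_def
  by (rule coeffs_vec_eqI, rule hadj_inner_eq(2)[where B = "\<lambda>g i. mult_z_adj i g"])
     (auto simp: inHn_def inH_mult_z_adj innerH_Mz)

definition delta_coeff :: "nat \<Rightarrow> real" where
  "delta_coeff k = (if k = 0 then 1 else real (m + k - 1) / real k)"

lemma delta_eq: "delta m f = (\<lambda>\<alpha>. complex_of_real (delta_coeff (mdeg \<alpha>)) * f \<alpha>)"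
  unfolding delta_def delta_coeff_def by (auto simp: fun_eq_iff)

lemma delta_coeff_le: "delta_coeff k \<le> real m"
proof (cases "k = 0")
  case False
  have "0 \<le> (real m - 1) * (real k - 1)"
    using m_pos False by simp
  also have "\<dots> = real m * real k - real (m + k - 1)"
    using m_pos by (simp add: of_nat_diff algebra_simps)
  finally have "real (m + k - 1) \<le> real m * real k" by simp
  then show ?thesis using False by (simp add: delta_coeff_def field_simps)
qed (use m_pos in \<open>simp add: delta_coeff_def\<close>)

lemma inH_delta:
  fixes f :: "'n::finite coeffs"
  assumes "inH m f"
  shows "inH m (delta m f)"
  unfolding inH_def
proof (rule summable_on_comparison_test)
  show "(\<lambda>\<alpha>. (real m)\<^sup>2 * ((cmod (f \<alpha>))\<^sup>2 / rho m \<alpha>)) summable_on UNIV"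
    using assms unfolding inH_def by (rule summable_on_cmult_right)
  fix \<alpha> :: "'n \<Rightarrow> nat"
  have "0 \<le> delta_coeff (mdeg \<alpha>)" using m_pos by (simp add: delta_coeff_def)
  then have "(cmod (delta m f \<alpha>))\<^sup>2 \<le> (real m)\<^sup>2 * (cmod (f \<alpha>))\<^sup>2"
    unfolding delta_eq using delta_coeff_le[of "mdeg \<alpha>"]
    by (simp add: norm_mult power_mult_distrib mult_right_mono power_mono)
  then show "(cmod (delta m f \<alpha>))\<^sup>2 / rho m \<alpha> \<le> (real m)\<^sup>2 * ((cmod (f \<alpha>))\<^sup>2 / rho m \<alpha>)"
    using rho_pos[of \<alpha>] by (simp add: divide_right_mono)
qed (rule sq_coeff_nonneg)

lemma innerH_delta: "innerH m (delta m f) g = innerH m f (delta m g)"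
  unfolding innerH_def delta_eq by (rule infsum_cong) simp

lemma Mz'_adj_eq: "inH m g \<Longrightarrow> Mz'_adj m g = (\<lambda>i. mult_z_adj i (delta m g))"
  unfolding Mz'_adj_def Mz'_def
  by (rule coeffs_vec_eqI, rule hadj_inner_eq(2)[where B = "\<lambda>g i. mult_z_adj i (delta m g)"])
     (auto simp: inHn_def inH_mult_z_adj inH_delta innerH_delta innerH_Mz)

lemma inH_Mz': "inHn m F \<Longrightarrow> inH m (Mz' m F)"
  unfolding Mz'_def by (intro inH_delta inH_Mz)

lemma mult_z_adj_delta_cong:
  assumes "\<And>\<beta>. \<beta> \<noteq> 0 \<Longrightarrow> v \<beta> = w \<beta>"
  shows "mult_z_adj i (delta m v) = mult_z_adj i (delta m w)"
proof
  fix \<alpha>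
  have "v (incr i \<alpha>) = w (incr i \<alpha>)" by (rule assms[OF incr_neq_zero])
  then show "mult_z_adj i (delta m v) \<alpha> = mult_z_adj i (delta m w) \<alpha>"
    by (simp add: mult_z_adj_def delta_def)
qed

lemma Mz'_at_0: "Mz' m F 0 = 0"
  by (simp add: Mz'_def delta_def Mz_at_0)

lemma mult_z_weighted_mult_z_adj:
  fixes v :: "'n::finite coeffs"
  shows "mult_z i (\<lambda>\<beta>. complex_of_real (c (mdeg \<beta>)) * mult_z_adj i v \<beta>) \<alpha> =
    complex_of_real (c (mdeg \<alpha> - 1)) * v \<alpha> * complex_of_real (real (\<alpha> i) / real (m + mdeg \<alpha> - 1))"
proof (cases "\<alpha> i = 0")
  case False
  define \<beta> where "\<beta> = \<alpha>(i := \<alpha> i - 1)"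
  have incr_\<beta>: "incr i \<beta> = \<alpha>" unfolding \<beta>_def using incr_decr[of \<alpha> i, OF False] .
  then have "mdeg \<beta> = mdeg \<alpha> - 1" "m + mdeg \<beta> = m + mdeg \<alpha> - 1" "Suc (\<beta> i) = \<alpha> i"
    using mdeg_incr[of i \<beta>] False m_pos by (auto simp: \<beta>_def)
  then show ?thesis
    using False incr_\<beta> unfolding mult_z_def mult_z_adj_def \<beta>_def[symmetric] by simp
qed (simp add: mult_z_eq_0)

lemma Mz_weighted_mult_z_adj:
  fixes v :: "'n::finite coeffs"
  shows "Mz (\<lambda>i \<beta>. complex_of_real (c (mdeg \<beta>)) * mult_z_adj i v \<beta>) \<alpha> =
    complex_of_real (c (mdeg \<alpha> - 1)) * v \<alpha> * complex_of_real (real (mdeg \<alpha>) / real (m + mdeg \<alpha> - 1))"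
proof -
  have "Mz (\<lambda>i \<beta>. complex_of_real (c (mdeg \<beta>)) * mult_z_adj i v \<beta>) \<alpha> =
      (\<Sum>i\<in>UNIV. complex_of_real (c (mdeg \<alpha> - 1)) * v \<alpha> *
        complex_of_real (real (\<alpha> i) / real (m + mdeg \<alpha> - 1)))"
    unfolding Mz_def sum_fun_apply by (simp only: mult_z_weighted_mult_z_adj)
  also have "\<dots> = complex_of_real (c (mdeg \<alpha> - 1)) * v \<alpha> *
      complex_of_real (\<Sum>i\<in>UNIV. real (\<alpha> i) / real (m + mdeg \<alpha> - 1))"
    by (simp only: of_real_sum sum_distrib_left)
  also have "(\<Sum>i\<in>UNIV. real (\<alpha> i) / real (m + mdeg \<alpha> - 1)) = real (mdeg \<alpha>) / real (m + mdeg \<alpha> - 1)"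
    unfolding mdeg_def by (simp add: sum_divide_distrib)
  finally show ?thesis .
qed

lemma Mz_mult_z_adj_delta:
  fixes u :: "'n::finite coeffs"
  assumes "u 0 = 0"
  shows "Mz (\<lambda>i. mult_z_adj i (delta m u)) = u"
proof
  fix \<alpha> :: "'n \<Rightarrow> nat"
  show "Mz (\<lambda>i. mult_z_adj i (delta m u)) \<alpha> = u \<alpha>"
  proof (cases "\<alpha> = 0")
    case False
    then have N: "mdeg \<alpha> \<noteq> 0" using mdeg_eq_0_iff by auto
    have "Mz (\<lambda>i. mult_z_adj i (delta m u)) \<alpha> =
        u \<alpha> * complex_of_real (delta_coeff (mdeg \<alpha>) * (real (mdeg \<alpha>) / real (m + mdeg \<alpha> - 1)))"
      using Mz_weighted_mult_z_adj[of "\<lambda>_. 1" "delta m u" \<alpha>] by (simp add: delta_eq mult_ac)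
    also have "delta_coeff (mdeg \<alpha>) * (real (mdeg \<alpha>) / real (m + mdeg \<alpha> - 1)) = 1"
      using N m_pos by (simp add: delta_coeff_def)
    finally show ?thesis by simp
  qed (simp add: assms Mz_at_0)
qed

section \<open>The projection onto the range of M_z^*\<close>

lemma inHn_diff: "inHn m F \<Longrightarrow> inHn m G \<Longrightarrow> inHn m (F - G)"
  unfolding inHn_def by (simp add: inH_diff)

lemma innerHn_diff_left:
  "inHn m F \<Longrightarrow> inHn m G \<Longrightarrow> inHn m X \<Longrightarrow> innerHn m (F - G) X = innerHn m F X - innerHn m G X"
  unfolding innerHn_def inHn_def by (simp add: innerH_diff_left sum_subtractf)

lemma innerHn_diff_right:
  "inHn m F \<Longrightarrow> inHn m G \<Longrightarrow> inHn m X \<Longrightarrow> innerHn m X (F - G) = innerHn m X F - innerHn m X G"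
  unfolding innerHn_def inHn_def by (simp add: innerH_diff_right sum_subtractf)

lemma innerHn_self: "inHn m F \<Longrightarrow> innerHn m F F = complex_of_real (\<Sum>i\<in>UNIV. sqnormH (F i))"
  unfolding innerHn_def inHn_def by (simp add: innerH_self)

lemma innerHn_self_eq_0_iff: assumes "inHn m F" shows "innerHn m F F = 0 \<longleftrightarrow> F = 0"
proof -
  have "innerHn m F F = 0 \<longleftrightarrow> (\<Sum>i\<in>UNIV. sqnormH (F i)) = 0"
    by (simp only: innerHn_self[OF assms] of_real_eq_0_iff)
  also have "\<dots> \<longleftrightarrow> (\<forall>i. F i = 0)"
    using assms by (simp add: sum_nonneg_eq_0_iff sqnormH_nonneg sqnormH_eq_0_iff inHn_def)
  finally show ?thesis by (simp add: fun_eq_iff)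
qed

lemma innerHn_le_of_normHn_less:
  assumes W: "inHn m W" and D: "inHn m D" and e: "normHn m D < e"
  shows "cmod (innerHn m W D) \<le> e * (\<Sum>i\<in>UNIV. sqnormH (W i) + 1)"
proof -
  have S: "0 \<le> (\<Sum>i\<in>UNIV. sqnormH (D i))" by (simp add: sum_nonneg sqnormH_nonneg)
  have "sqrt (\<Sum>i\<in>UNIV. sqnormH (D i)) < e"
    using e D by (simp add: normHn_def innerHn_self del: of_real_sum)
  moreover from this have "e > 0" using S by (meson le_less_trans real_sqrt_ge_zero)
  ultimately have "sqrt (\<Sum>i\<in>UNIV. sqnormH (D i)) < sqrt (e\<^sup>2)" by simp
  then have sum_D: "(\<Sum>i\<in>UNIV. sqnormH (D i)) < e\<^sup>2" by (simp only: real_sqrt_less_iff)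
  have "cmod (innerH m (W i) (D i)) \<le> e * (sqnormH (W i) + 1)" for i
  proof -
    have "sqnormH (D i) \<le> (\<Sum>j\<in>UNIV. sqnormH (D j))"
      by (rule member_le_sum) (auto simp: sqnormH_nonneg)
    then have "sqnormH (D i) / e \<le> e"
      using sum_D \<open>e > 0\<close> by (simp add: divide_le_eq power2_eq_square)
    moreover have "2 * cmod (innerH m (W i) (D i)) \<le> e * sqnormH (W i) + sqnormH (D i) / e"
      using W D \<open>e > 0\<close> by (intro innerH_weighted_bound) (auto simp: inHn_def)
    moreover have "0 \<le> e * sqnormH (W i)"
      using \<open>e > 0\<close> sqnormH_nonneg[of "W i"] by simp
    ultimately show ?thesis using \<open>e > 0\<close> by (simp add: algebra_simps)
  qed
  then have "cmod (innerHn m W D) \<le> (\<Sum>i\<in>UNIV. e * (sqnormH (W i) + 1))"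
    unfolding innerHn_def by (intro order_trans[OF norm_sum sum_mono])
  then show ?thesis by (simp add: sum_distrib_left)
qed

lemma orthogonal_range_Mz_adj:
  assumes W: "inHn m W" and Mz_W: "Mz W = 0" and s: "s \<in> range_Mz_adj m"
  shows "innerHn m W s = 0"
proof -
  let ?K = "\<Sum>i\<in>UNIV. sqnormH (W i) + 1"
  have "?K \<ge> 0" by (intro sum_nonneg) (simp add: sqnormH_nonneg add_nonneg_nonneg)
  moreover have "cmod (innerHn m W s) \<le> ?K * e" if "e > 0" for e
  proof -
    obtain f where f: "inH m f" "normHn m (s - Mz_adj m f) < e"
      using s \<open>e > 0\<close> unfolding range_Mz_adj_def by blast
    have s_H: "inHn m s" and Mz_adj_f: "inHn m (Mz_adj m f)"
      using s f(1) by (auto simp: range_Mz_adj_def Mz_adj_eq inHn_def inH_mult_z_adj)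
    have "innerHn m W (Mz_adj m f) = innerH m (Mz W) f"
      using innerH_Mz[OF W f(1)] Mz_adj_eq[OF f(1)] by simp
    then have "innerHn m W s = innerHn m W (s - Mz_adj m f)"
      using innerHn_diff_right[OF s_H Mz_adj_f W] Mz_W by (simp add: innerH_zero_left)
    also have "cmod \<dots> \<le> e * ?K"
      using innerHn_le_of_normHn_less[OF W inHn_diff[OF s_H Mz_adj_f] f(2)] .
    finally show ?thesis by (simp add: mult.commute)
  qed
  ultimately have "cmod (innerHn m W s) \<le> 0" by (rule nonpos_if_le_mult_all_pos)
  then show ?thesis by simp
qed

lemma P_Im_eqI:
  fixes F y :: "'n::finite \<Rightarrow> 'n coeffs"
  assumes F: "inHn m F" and y: "y \<in> range_Mz_adj m"
    and orth: "\<And>s. s \<in> range_Mz_adj m \<Longrightarrow> innerHn m (F - y) s = 0"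
  shows "P_Im m F = y"
  unfolding P_Im_def orth_proj_def
proof (rule the_equality)
  show "y \<in> range_Mz_adj m \<and> (\<forall>s\<in>range_Mz_adj m. innerHn m (F - y) s = 0)"
    using y orth by blast
next
  fix y' assume y': "y' \<in> range_Mz_adj m \<and> (\<forall>s\<in>range_Mz_adj m. innerHn m (F - y') s = 0)"
  have yH: "inHn m y" and y'H: "inHn m y'"
    using y y' by (auto simp: range_Mz_adj_def)
  have orth': "innerHn m (y - y') s = 0" if "s \<in> range_Mz_adj m" for s
  proof -
    have sH: "inHn m s" using that by (simp add: range_Mz_adj_def)
    have "y - y' = (F - y') - (F - y)" by simp
    then have "innerHn m (y - y') s = innerHn m (F - y') s - innerHn m (F - y) s"
      using innerHn_diff_left[OF inHn_diff[OF F y'H] inHn_diff[OF F yH] sH] by simp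
    then show ?thesis using y' orth that by simp
  qed
  have "innerHn m (y - y') (y - y') = innerHn m (y - y') y - innerHn m (y - y') y'"
    by (rule innerHn_diff_right[OF yH y'H inHn_diff[OF yH y'H]])
  also have "\<dots> = 0" using orth' y y' by simp
  finally show "y' = y" using innerHn_self_eq_0_iff[OF inHn_diff[OF yH y'H]] by simp
qed

lemma P_Im_eq:
  assumes F: "inHn m F"
  shows "P_Im m F = (\<lambda>i. mult_z_adj i (Mz' m F))"
proof (rule P_Im_eqI[OF F])
  have u: "inH m (Mz' m F)" by (rule inH_Mz'[OF F])
  have y_H: "inHn m (\<lambda>i. mult_z_adj i (Mz' m F))"
    using u by (simp add: inHn_def inH_mult_z_adj)
  have "Mz_adj m (Mz' m F) = (\<lambda>i. mult_z_adj i (Mz' m F))" by (rule Mz_adj_eq[OF u])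
  then show "(\<lambda>i. mult_z_adj i (Mz' m F)) \<in> range_Mz_adj m"
    unfolding range_Mz_adj_def using y_H u
    by (auto intro!: exI[of _ "Mz' m F"] simp: normHn_def innerHn_def innerH_def)
  have "Mz (\<lambda>i. mult_z_adj i (Mz' m F)) = Mz F"
    unfolding Mz'_def by (rule Mz_mult_z_adj_delta[of "Mz F", OF Mz_at_0])
  then have "Mz (F - (\<lambda>i. mult_z_adj i (Mz' m F))) = 0" by (simp add: Mz_diff)
  then show "innerHn m (F - (\<lambda>i. mult_z_adj i (Mz' m F))) s = 0" if "s \<in> range_Mz_adj m" for s
    using orthogonal_range_Mz_adj[OF inHn_diff[OF F y_H]] that by blast
qed

lemma mult_z_adj_add: "mult_z_adj i (f + g) = mult_z_adj i f + mult_z_adj i g"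
  unfolding mult_z_adj_def by (rule ext) (simp only: plus_fun_apply distrib_right)

lemma mult_z_adj_smul: "mult_z_adj i (smul c f) = smul c (mult_z_adj i f)"
  unfolding mult_z_adj_def smul_def by (simp add: fun_eq_iff mult.assoc)

lemma sqnormH_Mz_le:
  fixes G :: "'n::finite \<Rightarrow> 'n coeffs"
  assumes "inHn m G"
  shows "sqnormH (Mz G) \<le> real CARD('n) * (\<Sum>i\<in>UNIV. sqnormH (G i))"
proof -
  have "sqnormH (Mz G) \<le> real CARD('n) * (\<Sum>i\<in>UNIV. sqnormH (mult_z i (G i)))"
    unfolding Mz_def using assms sqnormH_sum_le[of UNIV "\<lambda>i. mult_z i (G i)"]
    by (simp add: inHn_def inH_mult_z)
  also have "\<dots> \<le> real CARD('n) * (\<Sum>i\<in>UNIV. sqnormH (G i))"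
    using assms by (intro mult_left_mono sum_mono mult_z_bounded(2)) (auto simp: inHn_def)
  finally show ?thesis .
qed

lemma bdd_op_inH: "bdd_op m X \<Longrightarrow> inH m f \<Longrightarrow> inH m (X f)"
  unfolding bdd_op_def by blast

lemma bdd_op_add: "bdd_op m X \<Longrightarrow> inH m f \<Longrightarrow> inH m g \<Longrightarrow> X (f + g) = X f + X g"
  unfolding bdd_op_def by blast

lemma bdd_op_smul: "bdd_op m X \<Longrightarrow> inH m f \<Longrightarrow> X (smul c f) = smul c (X f)"
  unfolding bdd_op_def by blast

lemma bdd_op_diff: assumes "bdd_op m X" "inH m f" "inH m g" shows "X (f - g) = X f - X g"
  using bdd_op_add[OF assms(1) inH_diff[OF assms(2,3)] assms(3)] by simp

lemma bdd_opI:
  assumes "\<And>f. inH m f \<Longrightarrow> inH m (X f)"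
    and "\<And>f g. inH m f \<Longrightarrow> inH m g \<Longrightarrow> X (f + g) = X f + X g"
    and "\<And>c f. inH m f \<Longrightarrow> X (smul c f) = smul c (X f)"
    and "\<And>f. inH m f \<Longrightarrow> normH m (X f) \<le> C * normH m f"
  shows "bdd_op m X"
  unfolding bdd_op_def using assms by blast

lemma bdd_op_sqnormH_bound:
  fixes X :: "'n::finite coeffs \<Rightarrow> 'n coeffs"
  assumes "bdd_op m X"
  obtains C where "C \<ge> 0" and "\<And>f. inH m f \<Longrightarrow> sqnormH (X f) \<le> C * sqnormH f"
proof -
  obtain C where C: "\<And>f. inH m f \<Longrightarrow> normH m (X f) \<le> C * normH m f"
    using assms unfolding bdd_op_def by blast
  have "sqnormH (X f) \<le> (max C 0)\<^sup>2 * sqnormH f" if f: "inH m f" for f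
  proof -
    have "sqrt (sqnormH (X f)) \<le> max C 0 * sqrt (sqnormH f)"
      using C[OF f] mult_right_mono[of C "max C 0" "sqrt (sqnormH f)"]
      by (simp add: normH_eq_sqrt_sqnormH f bdd_op_inH[OF assms f] sqnormH_nonneg)
    then have "(sqrt (sqnormH (X f)))\<^sup>2 \<le> (max C 0 * sqrt (sqnormH f))\<^sup>2"
      by (rule power_mono) (simp add: sqnormH_nonneg)
    then show ?thesis by (simp add: power_mult_distrib sqnormH_nonneg)
  qed
  then show thesis using that[of "(max C 0)\<^sup>2"] by simp
qed

lemma sigma_Mz_eq: "inH m f \<Longrightarrow> sigma_Mz m X f = Mz (\<lambda>i. X (mult_z_adj i f))"
  unfolding sigma_Mz_def Mz_def by (simp add: hadj_mult_z)

lemma sqnormH_sigma_Mz_le: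
  fixes X :: "'n::finite coeffs \<Rightarrow> 'n coeffs"
  assumes X: "bdd_op m X" and C: "C \<ge> 0" "\<And>f. inH m f \<Longrightarrow> sqnormH (X f) \<le> C * sqnormH f"
    and f: "inH m f"
  shows "sqnormH (sigma_Mz m X f) \<le> (real CARD('n))\<^sup>2 * C * sqnormH f"
proof -
  have "sqnormH (sigma_Mz m X f) \<le> real CARD('n) * (\<Sum>i\<in>UNIV. sqnormH (X (mult_z_adj i f)))"
    unfolding sigma_Mz_eq[OF f]
    by (rule sqnormH_Mz_le) (simp add: inHn_def bdd_op_inH[OF X] inH_mult_z_adj f)
  also have "\<dots> \<le> real CARD('n) * (\<Sum>i\<in>(UNIV::'n set). C * sqnormH f)"
  proof (intro mult_left_mono sum_mono)
    fix i
    have "sqnormH (X (mult_z_adj i f)) \<le> C * sqnormH (mult_z_adj i f)"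
      by (rule C(2)[OF inH_mult_z_adj[OF f]])
    also have "\<dots> \<le> C * sqnormH f"
      by (rule mult_left_mono[OF mult_z_adj_bounded(2)[OF f] C(1)])
    finally show "sqnormH (X (mult_z_adj i f)) \<le> C * sqnormH f" .
  qed simp
  also have "\<dots> = (real CARD('n))\<^sup>2 * C * sqnormH f"
    by (simp add: power2_eq_square)
  finally show ?thesis .
qed

lemma bdd_op_sigma_Mz:
  fixes X :: "'n::finite coeffs \<Rightarrow> 'n coeffs"
  assumes X: "bdd_op m X"
  shows "bdd_op m (sigma_Mz m X)"
proof -
  obtain C where C: "C \<ge> 0" "\<And>f. inH m f \<Longrightarrow> sqnormH (X f) \<le> C * sqnormH f"
    using bdd_op_sqnormH_bound[OF X] by blast
  have G: "inHn m (\<lambda>i. X (mult_z_adj i f))" if "inH m f" for f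
    using that by (simp add: inHn_def bdd_op_inH[OF X] inH_mult_z_adj)
  show ?thesis
  proof (rule bdd_opI)
    show "inH m (sigma_Mz m X f)" if "inH m f" for f
      using that inH_Mz[OF G] by (simp add: sigma_Mz_eq)
    show "sigma_Mz m X (f + g) = sigma_Mz m X f + sigma_Mz m X g" if "inH m f" "inH m g" for f g
      using that by (simp add: sigma_Mz_eq inH_add mult_z_adj_add bdd_op_add[OF X] inH_mult_z_adj Mz_add)
    show "sigma_Mz m X (smul c f) = smul c (sigma_Mz m X f)" if "inH m f" for c f
      using that by (simp add: sigma_Mz_eq inH_smul mult_z_adj_smul bdd_op_smul[OF X] inH_mult_z_adj
          Mz_def mult_z_smul smul_sum)
    show "normH m (sigma_Mz m X f) \<le> sqrt ((real CARD('n))\<^sup>2 * C) * normH m f" if f: "inH m f" for f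
    proof -
      have "sqrt (sqnormH (sigma_Mz m X f)) \<le> sqrt ((real CARD('n))\<^sup>2 * C * sqnormH f)"
        using sqnormH_sigma_Mz_le[OF X C f] by (rule real_sqrt_le_mono)
      then show ?thesis
        using f inH_Mz[OF G[OF f]] by (simp add: sigma_Mz_eq normH_eq_sqrt_sqnormH real_sqrt_mult)
    qed
  qed
qed

lemma bdd_op_sigma_Mz_pow: "bdd_op m T \<Longrightarrow> bdd_op m ((sigma_Mz m ^^ k) T)"
  by (induction k) (auto intro: bdd_op_sigma_Mz)

lemma Mz_sum_smul_mult_z_adj:
  assumes "inH m u"
  shows "Mz (\<lambda>i. \<Sum>j\<in>J. smul (c j) (X j (mult_z_adj i u))) = (\<Sum>j\<in>J. smul (c j) (sigma_Mz m (X j) u))"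
  unfolding sigma_Mz_eq[OF assms] Mz_def
  by (simp add: mult_z_sum mult_z_smul smul_sum sum.swap[of _ UNIV])

section \<open>Toeplitz operators on polynomials\<close>

lemma inH_shift_coeffs: assumes "inH m g" shows "inH m (shift_coeffs \<gamma> g)"
proof (induction "mdeg \<gamma>" arbitrary: \<gamma>)
  case 0
  then have "\<gamma> = 0" by (simp add: mdeg_eq_0_iff)
  then show ?case using assms by (simp only: shift_coeffs_0)
next
  case (Suc n)
  then obtain i where i: "\<gamma> i \<noteq> 0" by (metis mdeg_eq_0_iff nat.distinct(1) zero_fun_apply ext)
  define \<gamma>' where "\<gamma>' = \<gamma>(i := \<gamma> i - 1)"
  have "incr i \<gamma>' = \<gamma>" unfolding \<gamma>'_def by (rule incr_decr[of \<gamma> i, OF i])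
  moreover have "inH m (shift_coeffs \<gamma>' g)"
    using Suc mdeg_incr[of i \<gamma>'] \<open>incr i \<gamma>' = \<gamma>\<close> by simp
  ultimately show ?case by (metis shift_coeffs_incr inH_mult_z)
qed

lemma inH_cprod: assumes "inH m g" "is_poly p" shows "inH m (cprod g p)"
  unfolding cprod_poly[OF assms(2)] using assms(2) unfolding is_poly_def coeff_supp_def
  by (intro inH_sum inH_smul inH_shift_coeffs assms(1)) auto

lemma is_poly_mult_z_adj: assumes "is_poly p" shows "is_poly (mult_z_adj i p)"
proof -
  have "{\<alpha>. mult_z_adj i p \<alpha> \<noteq> 0} \<subseteq> incr i -` {\<alpha>. p \<alpha> \<noteq> 0}"
    unfolding mult_z_adj_def by auto
  moreover have "finite (incr i -` {\<alpha>. p \<alpha> \<noteq> 0})"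
    using assms unfolding is_poly_def by (rule finite_vimageI) (rule inj_incr)
  ultimately show ?thesis unfolding is_poly_def by (rule finite_subset)
qed

lemma innerH_eq_finite_sum:
  assumes "finite S" "\<And>\<alpha>. \<alpha> \<notin> S \<Longrightarrow> z \<alpha> = 0"
  shows "innerH m x z = (\<Sum>\<alpha>\<in>S. x \<alpha> * cnj (z \<alpha>) / complex_of_real (rho m \<alpha>))"
proof -
  have "innerH m x z = (\<Sum>\<^sub>\<infinity>\<alpha>\<in>S. x \<alpha> * cnj (z \<alpha>) / complex_of_real (rho m \<alpha>))"
    unfolding innerH_def by (rule infsum_cong_neutral) (use assms(2) in auto)
  then show ?thesis using assms(1) by simp
qed

definition Tmult_adj_poly :: "'n::finite coeffs \<Rightarrow> 'n coeffs \<Rightarrow> 'n coeffs" where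
  "Tmult_adj_poly h p = (\<lambda>\<gamma>. \<Sum>\<alpha>\<in>coeff_supp p.
      if \<gamma> \<le> \<alpha> then cnj (h (\<alpha> - \<gamma>)) * p \<alpha> * complex_of_real (rho m \<gamma> / rho m \<alpha>) else 0)"

lemma Tmult_adj_poly_eq_0:
  "\<gamma> \<notin> (\<Union>\<alpha>\<in>coeff_supp p. {\<gamma>. \<gamma> \<le> \<alpha>}) \<Longrightarrow> Tmult_adj_poly h p \<gamma> = 0"
  unfolding Tmult_adj_poly_def by (intro sum.neutral) auto

lemma finite_multi_indices_below_poly:
  "is_poly p \<Longrightarrow> finite (\<Union>\<alpha>\<in>coeff_supp p. {\<gamma>::'n::finite \<Rightarrow> nat. \<gamma> \<le> \<alpha>})"
  unfolding is_poly_def coeff_supp_def by (intro finite_UN_I finite_multi_indices_le) auto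

lemma inH_Tmult_adj_poly: assumes "is_poly p" shows "inH m (Tmult_adj_poly h p)"
proof (rule inH_poly)
  show "is_poly (Tmult_adj_poly h p)"
    unfolding is_poly_def
    by (rule finite_subset[OF _ finite_multi_indices_below_poly[OF assms]])
       (use Tmult_adj_poly_eq_0 in blast)
qed

lemma innerH_cprod_poly:
  fixes p x h :: "'n::finite coeffs"
  assumes p: "is_poly p"
  shows "innerH m (cprod h x) p = innerH m x (Tmult_adj_poly h p)"
proof -
  define Z where "Z = (\<Union>\<alpha>\<in>coeff_supp p. {\<gamma>::'n \<Rightarrow> nat. \<gamma> \<le> \<alpha>})"
  define F where "F \<alpha> \<gamma> = x \<gamma> * h (\<alpha> - \<gamma>) * cnj (p \<alpha>) / complex_of_real (rho m \<alpha>)" for \<alpha> \<gamma>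
  have fin_S: "finite (coeff_supp p)" using p unfolding is_poly_def coeff_supp_def .
  have fin_Z: "finite Z" unfolding Z_def by (rule finite_multi_indices_below_poly[OF p])
  have "innerH m (cprod h x) p = (\<Sum>\<alpha>\<in>coeff_supp p. cprod h x \<alpha> * cnj (p \<alpha>) / complex_of_real (rho m \<alpha>))"
    by (rule innerH_eq_finite_sum[OF fin_S]) (auto simp: coeff_supp_def)
  also have "\<dots> = (\<Sum>\<alpha>\<in>coeff_supp p. \<Sum>\<gamma>\<in>Z. if \<gamma> \<le> \<alpha> then F \<alpha> \<gamma> else 0)"
  proof (rule sum.cong[OF refl])
    fix \<alpha> assume "\<alpha> \<in> coeff_supp p"
    then have "{\<gamma>. \<gamma> \<le> \<alpha>} = {\<gamma>\<in>Z. \<gamma> \<le> \<alpha>}" unfolding Z_def by auto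
    then show "cprod h x \<alpha> * cnj (p \<alpha>) / complex_of_real (rho m \<alpha>) = (\<Sum>\<gamma>\<in>Z. if \<gamma> \<le> \<alpha> then F \<alpha> \<gamma> else 0)"
      unfolding cprod_commute_sum sum_distrib_right sum_divide_distrib sum.inter_filter[OF fin_Z, symmetric]
      by (simp add: F_def mult_ac)
  qed
  also have "\<dots> = (\<Sum>\<gamma>\<in>Z. \<Sum>\<alpha>\<in>coeff_supp p. if \<gamma> \<le> \<alpha> then F \<alpha> \<gamma> else 0)"
    by (rule sum.swap)
  also have "\<dots> = (\<Sum>\<gamma>\<in>Z. x \<gamma> * cnj (Tmult_adj_poly h p \<gamma>) / complex_of_real (rho m \<gamma>))"
  proof (rule sum.cong[OF refl])
    fix \<gamma>
    have "x \<gamma> * cnj (Tmult_adj_poly h p \<gamma>) / complex_of_real (rho m \<gamma>) =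
        (\<Sum>\<alpha>\<in>coeff_supp p. x \<gamma> * cnj (if \<gamma> \<le> \<alpha> then cnj (h (\<alpha> - \<gamma>)) * p \<alpha> *
          complex_of_real (rho m \<gamma> / rho m \<alpha>) else 0) / complex_of_real (rho m \<gamma>))"
      unfolding Tmult_adj_poly_def cnj_sum by (simp add: sum_distrib_left sum_divide_distrib)
    also have "\<dots> = (\<Sum>\<alpha>\<in>coeff_supp p. if \<gamma> \<le> \<alpha> then F \<alpha> \<gamma> else 0)"
      using rho_pos[of \<gamma>] rho_pos by (intro sum.cong) (auto simp: F_def field_simps)
    finally show "(\<Sum>\<alpha>\<in>coeff_supp p. if \<gamma> \<le> \<alpha> then F \<alpha> \<gamma> else 0) =
        x \<gamma> * cnj (Tmult_adj_poly h p \<gamma>) / complex_of_real (rho m \<gamma>)" ..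
  qed
  also have "\<dots> = innerH m x (Tmult_adj_poly h p)"
    by (rule innerH_eq_finite_sum[OF fin_Z, symmetric]) (use Tmult_adj_poly_eq_0 in \<open>auto simp: Z_def\<close>)
  finally show ?thesis .
qed

lemma Tmult_adj_eq:
  fixes h p :: "'n::finite coeffs"
  assumes h: "inH m h" and p: "is_poly p"
  shows "Tmult_adj m h p = Tmult_adj_poly h p"
  unfolding Tmult_adj_def
proof (rule the_equality)
  show "inH m (Tmult_adj_poly h p) \<and>
      (\<forall>x. inH m x \<longrightarrow> inH m (cprod h x) \<longrightarrow> innerH m (cprod h x) p = innerH m x (Tmult_adj_poly h p))"
    using inH_Tmult_adj_poly[OF p] innerH_cprod_poly[OF p] by blast
  fix z assume z: "inH m z \<and> (\<forall>x. inH m x \<longrightarrow> inH m (cprod h x) \<longrightarrow> innerH m (cprod h x) p = innerH m x z)"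
  show "z = Tmult_adj_poly h p"
  proof
    fix \<gamma>
    have "innerH m (monomial_coeffs \<gamma>) z = innerH m (cprod h (monomial_coeffs \<gamma>)) p"
      using z inH_monomial_coeffs inH_cprod[OF h is_poly_monomial_coeffs] by (blast intro: sym)
    also have "\<dots> = innerH m (monomial_coeffs \<gamma>) (Tmult_adj_poly h p)"
      by (rule innerH_cprod_poly[OF p])
    finally show "z \<gamma> = Tmult_adj_poly h p \<gamma>"
      using rho_pos[of \<gamma>] by (simp add: innerH_monomial_coeffs_left)
  qed
qed

lemma Toeplitz_poly_inner:
  fixes g h :: "'n::finite coeffs" and T :: "'n coeffs \<Rightarrow> 'n coeffs"
  assumes g: "inH m g" and h: "inH m h"
    and T: "\<forall>p. is_poly p \<longrightarrow> T p = cprod g p + Tmult_adj m h p"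
    and p: "is_poly p" and q: "is_poly q"
  shows "innerH m (T p) q = innerH m (cprod g p) q + innerH m p (cprod h q)"
proof -
  have "innerH m (T p) q = innerH m (cprod g p) q + innerH m (Tmult_adj_poly h p) q"
    using T p Tmult_adj_eq[OF h p]
    by (simp add: innerH_add_left inH_cprod[OF g p] inH_Tmult_adj_poly inH_poly[OF q])
  also have "innerH m (Tmult_adj_poly h p) q = cnj (innerH m (cprod h q) p)"
    by (simp add: innerH_cprod_poly[OF p] innerH_commute[of "Tmult_adj_poly h p"])
  also have "\<dots> = innerH m p (cprod h q)"
    by (simp add: innerH_commute[of p])
  finally show ?thesis .
qed

definition sigma_diag :: "nat \<Rightarrow> 'n::finite coeffs \<Rightarrow> 'n coeffs" where
  "sigma_diag k f = (\<lambda>\<alpha>. complex_of_real (sigma_weight m k (mdeg \<alpha>)) * f \<alpha>)"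

lemma sigma_diag_0 [simp]: "sigma_diag 0 f = f"
  by (simp add: sigma_diag_def)

lemma Mz_sigma_diag_mult_z_adj: "Mz (\<lambda>i. sigma_diag k (mult_z_adj i f)) = sigma_diag (Suc k) f"
proof
  fix \<alpha>
  show "Mz (\<lambda>i. sigma_diag k (mult_z_adj i f)) \<alpha> = sigma_diag (Suc k) f \<alpha>"
    using Mz_weighted_mult_z_adj[of "sigma_weight m k" f \<alpha>] by (simp add: sigma_diag_def mult_ac)
qed

lemma innerH_sigma_Mz:
  assumes "bdd_op m X" "inH m p" "inH m q"
  shows "innerH m (sigma_Mz m X p) q = (\<Sum>i\<in>UNIV. innerH m (X (mult_z_adj i p)) (mult_z_adj i q))"
  unfolding sigma_Mz_eq[OF assms(2)] Mz_def using assms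
  by (subst innerH_sum_left) (auto intro: inH_mult_z bdd_op_inH inH_mult_z_adj simp: innerH_mult_z)

lemma sum_innerH_cprod_sigma_diag:
  assumes g: "inH m g" and p: "is_poly p" and q: "inH m q"
  shows "(\<Sum>i\<in>UNIV. innerH m (cprod g (sigma_diag k (mult_z_adj i p))) (mult_z_adj i q)) =
    innerH m (cprod g (sigma_diag (Suc k) p)) q"
proof -
  have poly: "is_poly (mult_z i (sigma_diag k (mult_z_adj i p)))" for i
    unfolding sigma_diag_def by (intro is_poly_mult_z is_poly_mult is_poly_mult_z_adj p)
  have "(\<Sum>i\<in>UNIV. innerH m (cprod g (sigma_diag k (mult_z_adj i p))) (mult_z_adj i q)) =
      (\<Sum>i\<in>UNIV. innerH m (cprod g (mult_z i (sigma_diag k (mult_z_adj i p)))) q)"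
    by (simp only: innerH_mult_z[symmetric] cprod_mult_z)
  also have "\<dots> = innerH m (cprod g (Mz (\<lambda>i. sigma_diag k (mult_z_adj i p)))) q"
    unfolding Mz_def cprod_sum[OF finite]
    by (rule innerH_sum_left[symmetric]) (auto intro: inH_cprod[OF g] poly q)
  finally show ?thesis by (simp only: Mz_sigma_diag_mult_z_adj)
qed

lemma sigma_pow_Toeplitz_poly_inner:
  fixes g h :: "'n::finite coeffs" and T :: "'n coeffs \<Rightarrow> 'n coeffs"
  assumes g: "inH m g" and h: "inH m h" and T_bdd: "bdd_op m T"
    and T: "\<forall>p. is_poly p \<longrightarrow> T p = cprod g p + Tmult_adj m h p"
  shows "is_poly p \<Longrightarrow> is_poly q \<Longrightarrow> innerH m ((sigma_Mz m ^^ k) T p) q =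
    innerH m (cprod g (sigma_diag k p)) q + innerH m p (cprod h (sigma_diag k q))"
proof (induction k arbitrary: p q)
  case 0
  then show ?case using Toeplitz_poly_inner[OF g h T 0] by simp
next
  case (Suc k)
  have A: "is_poly (mult_z_adj i p)" "is_poly (mult_z_adj i q)" for i
    using Suc.prems by (simp_all add: is_poly_mult_z_adj)
  have "innerH m ((sigma_Mz m ^^ Suc k) T p) q =
      (\<Sum>i\<in>UNIV. innerH m (cprod g (sigma_diag k (mult_z_adj i p))) (mult_z_adj i q)) +
      (\<Sum>i\<in>UNIV. innerH m (mult_z_adj i p) (cprod h (sigma_diag k (mult_z_adj i q))))"
    using Suc.prems A
    by (simp add: innerH_sigma_Mz bdd_op_sigma_Mz_pow[OF T_bdd] inH_poly Suc.IH sum.distrib)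
  also have "(\<Sum>i\<in>UNIV. innerH m (mult_z_adj i p) (cprod h (sigma_diag k (mult_z_adj i q)))) =
      cnj (\<Sum>i\<in>UNIV. innerH m (cprod h (sigma_diag k (mult_z_adj i q))) (mult_z_adj i p))"
    by (simp add: innerH_commute[of "mult_z_adj _ p"])
  finally show ?case
    using Suc.prems
    by (simp add: sum_innerH_cprod_sigma_diag g h inH_poly innerH_commute[of p])
qed

lemma coeff_sigma_pow_Toeplitz_poly:
  fixes g h :: "'n::finite coeffs" and T :: "'n coeffs \<Rightarrow> 'n coeffs"
  assumes g: "inH m g" and h: "inH m h" and T_bdd: "bdd_op m T"
    and T: "\<forall>p. is_poly p \<longrightarrow> T p = cprod g p + Tmult_adj m h p"
    and p: "is_poly p"
  shows "((sigma_Mz m ^^ k) T) p \<beta> = cprod g (sigma_diag k p) \<beta> +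
    complex_of_real (rho m \<beta> * sigma_weight m k (mdeg \<beta>)) * innerH m p (cprod h (monomial_coeffs \<beta>))"
proof -
  have "sigma_diag k (monomial_coeffs \<beta>) = smul (complex_of_real (sigma_weight m k (mdeg \<beta>))) (monomial_coeffs \<beta>)"
    by (auto simp: sigma_diag_def smul_def monomial_coeffs_def)
  then have "innerH m ((sigma_Mz m ^^ k) T p) (monomial_coeffs \<beta>) =
      innerH m (cprod g (sigma_diag k p)) (monomial_coeffs \<beta>) +
      complex_of_real (sigma_weight m k (mdeg \<beta>)) * innerH m p (cprod h (monomial_coeffs \<beta>))"
    using sigma_pow_Toeplitz_poly_inner[OF g h T_bdd T p is_poly_monomial_coeffs]
    by (simp add: cprod_smul innerH_smul_right)
  then show ?thesis
    using rho_pos[of \<beta>] by (simp add: innerH_monomial_coeffs_right field_simps)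
qed

section \<open>The alternating sum of the iterates of \<sigma>\<close>

definition sigma_defect :: "('n::finite coeffs \<Rightarrow> 'n coeffs) \<Rightarrow> 'n coeffs \<Rightarrow> 'n coeffs" where
  "sigma_defect T v = (\<Sum>k\<le>m. smul (of_int ((-1) ^ k) * of_nat (m choose k)) ((sigma_Mz m ^^ k) T v))"

lemma alternating_sum_sigma_weight_complex:
  assumes "1 \<le> N"
  shows "(\<Sum>k\<le>m. of_int ((-1) ^ k) * of_nat (m choose k) * complex_of_real (sigma_weight m k N)) = 0"
proof -
  have "(\<Sum>k\<le>m. of_int ((-1) ^ k) * of_nat (m choose k) * complex_of_real (sigma_weight m k N)) =
      complex_of_real (\<Sum>k\<le>m. (-1) ^ k * real (m choose k) * sigma_weight m k N)"
    by (simp add: of_real_sum)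
  then show ?thesis using alternating_sum_sigma_weight[OF m_pos assms] by simp
qed

lemma alternating_sum_cprod_sigma_diag:
  assumes "p 0 = 0"
  shows "(\<Sum>k\<le>m. of_int ((-1) ^ k) * of_nat (m choose k) * cprod g (sigma_diag k p) \<beta>) = 0"
proof -
  let ?c = "\<lambda>k. of_int ((-1) ^ k) * of_nat (m choose k) :: complex"
  have "(\<Sum>k\<le>m. ?c k * cprod g (sigma_diag k p) \<beta>) =
      (\<Sum>k\<le>m. \<Sum>\<gamma>\<in>{\<gamma>. \<gamma> \<le> \<beta>}. g \<gamma> * p (\<beta> - \<gamma>) * (?c k * complex_of_real (sigma_weight m k (mdeg (\<beta> - \<gamma>)))))"
    unfolding cprod_def sigma_diag_def by (simp add: sum_distrib_left mult_ac)
  also have "\<dots> = (\<Sum>\<gamma>\<in>{\<gamma>. \<gamma> \<le> \<beta>}. g \<gamma> * p (\<beta> - \<gamma>) *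
      (\<Sum>k\<le>m. ?c k * complex_of_real (sigma_weight m k (mdeg (\<beta> - \<gamma>)))))"
    by (subst sum.swap) (simp add: sum_distrib_left)
  also have "\<dots> = 0"
  proof (rule sum.neutral, rule ballI)
    fix \<gamma>
    show "g \<gamma> * p (\<beta> - \<gamma>) * (\<Sum>k\<le>m. ?c k * complex_of_real (sigma_weight m k (mdeg (\<beta> - \<gamma>)))) = 0"
    proof (cases "p (\<beta> - \<gamma>) = 0")
      case False
      then have "1 \<le> mdeg (\<beta> - \<gamma>)" using assms mdeg_eq_0_iff by (metis less_one not_le)
      then show ?thesis using alternating_sum_sigma_weight_complex by simp
    qed simp
  qed
  finally show ?thesis .
qed

lemma sigma_defect_poly_eq_0:
  fixes g h :: "'n::finite coeffs" and T :: "'n coeffs \<Rightarrow> 'n coeffs"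
  assumes g: "inH m g" and h: "inH m h" and T_bdd: "bdd_op m T"
    and T: "\<forall>p. is_poly p \<longrightarrow> T p = cprod g p + Tmult_adj m h p"
    and p: "is_poly p" "p 0 = 0" and \<beta>: "\<beta> \<noteq> 0"
  shows "sigma_defect T p \<beta> = 0"
proof -
  let ?c = "\<lambda>k. of_int ((-1) ^ k) * of_nat (m choose k) :: complex"
  let ?I = "complex_of_real (rho m \<beta>) * innerH m p (cprod h (monomial_coeffs \<beta>))"
  have "sigma_defect T p \<beta> = (\<Sum>k\<le>m. ?c k * cprod g (sigma_diag k p) \<beta>) +
      ?I * (\<Sum>k\<le>m. ?c k * complex_of_real (sigma_weight m k (mdeg \<beta>)))"
    unfolding sigma_defect_def sum_fun_apply smul_def coeff_sigma_pow_Toeplitz_poly[OF g h T_bdd T p(1)]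
    by (simp add: sum.distrib sum_distrib_left algebra_simps)
  moreover have "1 \<le> mdeg \<beta>" using \<beta> mdeg_eq_0_iff by (metis less_one not_le)
  ultimately show ?thesis
    using alternating_sum_cprod_sigma_diag[of p, OF p(2)] alternating_sum_sigma_weight_complex by simp
qed

lemma poly_approx:
  fixes u :: "'n::finite coeffs"
  assumes u: "inH m u" and e: "e > 0"
  obtains p where "is_poly p" "p 0 = u 0" "normH m (u - p) < e"
proof -
  define \<phi> where "\<phi> \<alpha> = (cmod (u \<alpha>))\<^sup>2 / rho m \<alpha>" for \<alpha>
  have s: "\<phi> summable_on UNIV" using u unfolding inH_def \<phi>_def .
  have \<phi>_nonneg: "0 \<le> \<phi> \<alpha>" for \<alpha> :: "'n \<Rightarrow> nat" by (simp add: \<phi>_def)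
  obtain F0 where F0: "finite F0" "dist (sum \<phi> F0) (infsum \<phi> UNIV) \<le> e\<^sup>2 / 2"
    using infsum_finite_approximation[OF s, of "e\<^sup>2 / 2"] e by auto
  define F where "F = insert 0 F0"
  define p where "p \<alpha> = (if \<alpha> \<in> F then u \<alpha> else 0)" for \<alpha>
  have fin: "finite F" unfolding F_def using F0(1) by simp
  have p_poly: "is_poly p" unfolding is_poly_def p_def by (rule finite_subset[OF _ fin]) auto
  have "sum \<phi> F0 \<le> sum \<phi> F"
    by (rule sum_mono2[OF fin]) (auto simp: F_def \<phi>_nonneg)
  moreover have "infsum \<phi> UNIV = sum \<phi> F + infsum \<phi> (- F)"
    using infsum_Un_disjoint[of \<phi> F "- F"] summable_on_subset[OF s] fin
    by (simp add: Compl_partition)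
  moreover have "sqnormH (u - p) = infsum \<phi> (- F)"
    unfolding sqnormH_def by (rule infsum_cong_neutral) (auto simp: p_def \<phi>_def)
  moreover have "0 < e\<^sup>2" using e by simp
  ultimately have "sqnormH (u - p) < e\<^sup>2"
    using F0(2) unfolding dist_real_def abs_le_iff by linarith
  then have "sqrt (sqnormH (u - p)) < e"
    using e real_sqrt_less_mono by fastforce
  then have "normH m (u - p) < e"
    by (simp add: normH_eq_sqrt_sqnormH inH_diff[OF u inH_poly[OF p_poly]])
  moreover have "p 0 = u 0" unfolding p_def F_def by simp
  ultimately show thesis using that p_poly by blast
qed

lemma bdd_op_coeff_bound:
  fixes X :: "'n::finite coeffs \<Rightarrow> 'n coeffs"
  assumes "bdd_op m X"
  obtains C where "C \<ge> 0" "\<And>v. inH m v \<Longrightarrow> cmod (X v \<beta>) \<le> C * normH m v"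
proof -
  obtain C where C: "C \<ge> 0" "\<And>f. inH m f \<Longrightarrow> sqnormH (X f) \<le> C * sqnormH f"
    using bdd_op_sqnormH_bound[OF assms] by blast
  have "cmod (X v \<beta>) \<le> sqrt (rho m \<beta> * C) * normH m v" if v: "inH m v" for v
  proof -
    have "sqrt (sqnormH (X v)) \<le> sqrt (C * sqnormH v)"
      using C(2)[OF v] by (rule real_sqrt_le_mono)
    then have "normH m (X v) \<le> sqrt C * normH m v"
      using v bdd_op_inH[OF assms v] by (simp add: normH_eq_sqrt_sqnormH real_sqrt_mult)
    then have "sqrt (rho m \<beta>) * normH m (X v) \<le> sqrt (rho m \<beta>) * (sqrt C * normH m v)"
      by (rule mult_left_mono) (simp add: less_imp_le[OF rho_pos])
    then show ?thesis
      using norm_coeff_le[OF bdd_op_inH[OF assms v], of \<beta>] by (simp add: real_sqrt_mult mult_ac)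
  qed
  then show thesis using that[of "sqrt (rho m \<beta> * C)"] C(1) rho_pos[of \<beta>] by simp
qed

lemma sigma_defect_eq_0:
  fixes g h u :: "'n::finite coeffs" and T :: "'n coeffs \<Rightarrow> 'n coeffs"
  assumes g: "inH m g" and h: "inH m h" and T_bdd: "bdd_op m T"
    and T: "\<forall>p. is_poly p \<longrightarrow> T p = cprod g p + Tmult_adj m h p"
    and u: "inH m u" "u 0 = 0" and \<beta>: "\<beta> \<noteq> 0"
  shows "sigma_defect T u \<beta> = 0"
proof -
  let ?c = "\<lambda>k. of_int ((-1) ^ k) * of_nat (m choose k) :: complex"
  have "\<exists>C\<ge>0. \<forall>v. inH m v \<longrightarrow> cmod (((sigma_Mz m ^^ k) T) v \<beta>) \<le> C * normH m v" for k
    using bdd_op_coeff_bound[OF bdd_op_sigma_Mz_pow[OF T_bdd]] by metis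
  then obtain C where C: "\<And>k. C k \<ge> 0"
    "\<And>k v. inH m v \<Longrightarrow> cmod (((sigma_Mz m ^^ k) T) v \<beta>) \<le> C k * normH m v"
    by metis
  define K where "K = (\<Sum>k\<le>m. cmod (?c k) * C k)"
  have "K \<ge> 0" unfolding K_def using C(1) by (intro sum_nonneg) simp
  moreover have "cmod (sigma_defect T u \<beta>) \<le> K * e" if "e > 0" for e
  proof -
    obtain p where p: "is_poly p" "p 0 = u 0" "normH m (u - p) < e"
      using poly_approx[OF u(1) \<open>e > 0\<close>] by blast
    have p_H: "inH m p" by (rule inH_poly[OF p(1)])
    have "sigma_defect T p \<beta> = 0"
      using sigma_defect_poly_eq_0[OF g h T_bdd T p(1) _ \<beta>] p(2) u(2) by simp
    then have "sigma_defect T u \<beta> = (\<Sum>k\<le>m. ?c k * ((sigma_Mz m ^^ k) T (u - p)) \<beta>)"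
      unfolding sigma_defect_def sum_fun_apply smul_def
      by (simp add: bdd_op_diff[OF bdd_op_sigma_Mz_pow[OF T_bdd] u(1) p_H] right_diff_distrib sum_subtractf)
    also have "cmod \<dots> \<le> (\<Sum>k\<le>m. cmod (?c k) * (C k * normH m (u - p)))"
      using C(2)[OF inH_diff[OF u(1) p_H]]
      by (intro order_trans[OF norm_sum sum_mono]) (simp add: norm_mult mult_left_mono)
    also have "\<dots> = K * normH m (u - p)"
      unfolding K_def sum_distrib_right by (simp add: mult_ac)
    also have "\<dots> \<le> K * e"
      using p(3) \<open>K \<ge> 0\<close> by (intro mult_left_mono) auto
    finally show ?thesis .
  qed
  ultimately have "cmod (sigma_defect T u \<beta>) \<le> 0" by (rule nonpos_if_le_mult_all_pos)
  then show ?thesis by simp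
qed

lemma Toeplitz_eq_sigma_sum:
  fixes g h u :: "'n::finite coeffs" and T :: "'n coeffs \<Rightarrow> 'n coeffs"
  assumes g: "inH m g" and h: "inH m h" and T_bdd: "bdd_op m T"
    and T: "\<forall>p. is_poly p \<longrightarrow> T p = cprod g p + Tmult_adj m h p"
    and u: "inH m u" "u 0 = 0" and \<beta>: "\<beta> \<noteq> 0"
  shows "T u \<beta> = (\<Sum>j<m. smul (of_int ((-1) ^ j) * of_nat (m choose (j + 1))) ((sigma_Mz m ^^ Suc j) T u)) \<beta>"
  using sigma_defect_eq_0[OF assms]
    sum_alternating_binomial_shift[of m "\<lambda>k. ((sigma_Mz m ^^ k) T u) \<beta>"]
  unfolding sigma_defect_def sum_fun_apply smul_def by simp

lemma Mz'_adj_Toeplitz: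
  fixes g h u :: "'n::finite coeffs" and T :: "'n coeffs \<Rightarrow> 'n coeffs"
  assumes g: "inH m g" and h: "inH m h" and T_bdd: "bdd_op m T"
    and T: "\<forall>p. is_poly p \<longrightarrow> T p = cprod g p + Tmult_adj m h p"
    and u: "inH m u" "u 0 = 0"
  defines "G \<equiv> \<lambda>i. \<Sum>j<m. smul (of_int ((-1) ^ j) * of_nat (m choose (j + 1)))
    ((sigma_Mz m ^^ j) T (mult_z_adj i u))"
  shows "Mz'_adj m (T u) = P_Im m G"
proof -
  have "inH m ((sigma_Mz m ^^ j) T (mult_z_adj i u))" for i j
    by (rule bdd_op_inH[OF bdd_op_sigma_Mz_pow[OF T_bdd] inH_mult_z_adj[OF u(1)]])
  then have G_H: "inHn m G"
    unfolding G_def inHn_def by (intro allI inH_sum inH_smul finite_lessThan)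
  have "Mz G = (\<Sum>j<m. smul (of_int ((-1) ^ j) * of_nat (m choose (j + 1))) ((sigma_Mz m ^^ Suc j) T u))"
    unfolding G_def Mz_sum_smul_mult_z_adj[OF u(1), where X = "\<lambda>j. (sigma_Mz m ^^ j) T"] by simp
  then have "T u \<beta> = Mz G \<beta>" if "\<beta> \<noteq> 0" for \<beta>
    using Toeplitz_eq_sigma_sum[OF g h T_bdd T u that] by simp
  then have "mult_z_adj i (delta m (T u)) = mult_z_adj i (delta m (Mz G))" for i
    by (rule mult_z_adj_delta_cong)
  then show ?thesis
    using P_Im_eq[OF G_H] Mz'_adj_eq[OF bdd_op_inH[OF T_bdd u(1)]] by (simp add: Mz'_def)
qed

end

theorem theorem5:
  fixes m :: nat and g h :: "'n::finite coeffs" and T :: "'n coeffs \<Rightarrow> 'n coeffs"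
  assumes "m \<ge> 1"
    and "inH m g" and "inH m h"
    and "bdd_op m T"
    and "\<forall>p. is_poly p \<longrightarrow> T p = cprod g p + Tmult_adj m h p"
  shows "\<forall>F. inHn m F \<longrightarrow>
    Mz'_adj m (T (Mz' m F)) =
    P_Im m (\<lambda>i. (\<lambda>f. \<Sum>j<m. smul (of_int ((-1) ^ j) * of_nat (m choose (j + 1)))
                              (((sigma_Mz m) ^^ j) T f)) (P_Im m F i))"
proof (intro allI impI)
  fix F :: "'n \<Rightarrow> 'n coeffs"
  assume F: "inHn m F"
  have m_pos: "1 \<le> m" using assms(1) by simp
  have "P_Im m F = (\<lambda>i. mult_z_adj m i (Mz' m F))"
    by (rule P_Im_eq[OF m_pos F])
  moreover have "Mz'_adj m (T (Mz' m F)) = P_Im m (\<lambda>i. \<Sum>j<m. smul (of_int ((-1) ^ j) * of_nat (m choose (j + 1)))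
      ((sigma_Mz m ^^ j) T (mult_z_adj m i (Mz' m F))))"
    by (rule Mz'_adj_Toeplitz[OF m_pos assms(2-5) inH_Mz'[OF m_pos F] Mz'_at_0[OF m_pos]])
  ultimately show "Mz'_adj m (T (Mz' m F)) =
    P_Im m (\<lambda>i. (\<lambda>f. \<Sum>j<m. smul (of_int ((-1) ^ j) * of_nat (m choose (j + 1)))
                              (((sigma_Mz m) ^^ j) T f)) (P_Im m F i))"
    by simp
qed

end
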